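(* For $\mathbf{x}\in\mathrm{Mat}_{m\times n}(\mathbb{C}^* )$ with $\mathrm{gRSK}(\mathbf{x})=(P,Q)$, the central charge $\Delta(\mathbf{x})=F(\mathbf{x})-F(P)$ of the $\mathrm{GL}_n$-geometric crystal $(X_n)^m$ satisfies $\Delta(\mathbf{x})=F(Q)+\delta_{m,n}z_{n,n}$, where $\delta_{m,n}$ is the Kronecker delta and (when $m=n$) $z_{n,n}$ is the last part of the common shape of $P$ and $Q$. In particular, $\Delta$ is positive, i.e. it is a rational function admitting an expression as a ratio of polynomials with nonnegative real coefficients.
   Context: $F(\mathbf{x})=\sum_{i\in[m],j\in[n]}x_i^j$. For $N,K\ge1$, $\mathrm{GT}_N^{\le K}$ is the torus of arrays $(z_{i,j})$, $1\le i\le K$, $i\le j\le N$, and its decoration is $F(\mathbf{z})=\sum_{1\le i\le K,\,i\le j\le N-1}\frac{z_{i,j+1}}{z_{i,j}}+\sum_{1\le i\le K-1,\,i\le j\le N-1}\frac{z_{i,j}}{z_{i+1,j+1}}+\mathbb{1}_{K<N}z_{K,K}$. Geometric RSK: with rows $\mathbf{x}_a$, $W(y_1,\dots,y_n)$ the $n\times n$ matrix with diagonal $y_1,\dots,y_n$, $1$'s directly below, $0$ elsewhere, $M(\mathbf{x}_1,\dots,\mathbf{x}_k)=W(\mathbf{x}_1)\cdots W(\mathbf{x}_k)$, and $\Delta_I$ the minor with rows $I$, columns $[1,|I|]$ ($\Delta_\emptyset=1$): $P=(z_{i,j})\in\mathrm{GT}_n^{\le m}$ with $z_{i,j}=\Delta_{[i,j]}(M(\mathbf{x}_1,\dots,\mathbf{x}_m))/\Delta_{[i+1,j]}(M(\mathbf{x}_1,\dots,\mathbf{x}_m))$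 and $Q=(z'_{j',i'})\in\mathrm{GT}_m^{\le n}$ with $z'_{j',i'}=\Delta_{[j',n]}(M(\mathbf{x}_1,\dots,\mathbf{x}_{i'}))/\Delta_{[j'+1,n]}(M(\mathbf{x}_1,\dots,\mathbf{x}_{i'}))$ ($1\le j'\le n$, $j'\le i'\le m$). The paper identifies $F(\mathbf{x})-F(P)$ with Berenstein–Kazhdan's central charge on $(X_n)^m$. *)

theory Defs
  imports Complex_Main "Jordan_Normal_Form.Determinant"
begin

text \<open>A matrix x in Mat_{m x n}(C^*) is a function x :: nat => nat => complex,
  x a j = x_a^j, for 1 <= a <= m, 1 <= j <= n (rows x_a). Arrays in GT are functions
  z :: nat => nat => complex, z i j = z_{i,j}, 1-indexed.\<close>

definition Wmat :: "nat \<Rightarrow> (nat \<Rightarrow> complex) \<Rightarrow> complex mat" where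
  "Wmat n y = mat n n (\<lambda>(r, c). if r = c then y (r + 1) else if r = c + 1 then 1 else 0)"

fun Mprod :: "nat \<Rightarrow> (nat \<Rightarrow> nat \<Rightarrow> complex) \<Rightarrow> nat \<Rightarrow> complex mat" where
  "Mprod n x 0 = 1\<^sub>m n"
| "Mprod n x (Suc k) = Mprod n x k * Wmat n (x (Suc k))"

text \<open>Delta_{[a,b]}(A): minor with rows a..b and columns 1..(b-a+1) (1-indexed);
  the empty minor (a > b) is 1.\<close>
definition minor_int :: "nat \<Rightarrow> nat \<Rightarrow> complex mat \<Rightarrow> complex" where
  "minor_int a b A = det (mat (b + 1 - a) (b + 1 - a) (\<lambda>(r, c). A $$ (a - 1 + r, c)))"

text \<open>gRSK: P = (z_{i,j}) in GT_n^{<= m}, Q = (z'_{j',i'}) in GT_m^{<= n}.\<close>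
definition gRSK_P :: "nat \<Rightarrow> nat \<Rightarrow> (nat \<Rightarrow> nat \<Rightarrow> complex) \<Rightarrow> nat \<Rightarrow> nat \<Rightarrow> complex" where
  "gRSK_P m n x i j = minor_int i j (Mprod n x m) / minor_int (i + 1) j (Mprod n x m)"

definition gRSK_Q :: "nat \<Rightarrow> nat \<Rightarrow> (nat \<Rightarrow> nat \<Rightarrow> complex) \<Rightarrow> nat \<Rightarrow> nat \<Rightarrow> complex" where
  "gRSK_Q m n x j' i' = minor_int j' n (Mprod n x i') / minor_int (j' + 1) n (Mprod n x i')"

definition F_GT :: "nat \<Rightarrow> nat \<Rightarrow> (nat \<Rightarrow> nat \<Rightarrow> complex) \<Rightarrow> complex" where
  "F_GT N K z =
     (\<Sum>i = 1..K. \<Sum>j = i..N - 1. z i (j + 1) / z i j)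
   + (\<Sum>i = 1..K - 1. \<Sum>j = i..N - 1. z i j / z (i + 1) (j + 1))
   + (if K < N then z K K else 0)"

definition F_mat :: "nat \<Rightarrow> nat \<Rightarrow> (nat \<Rightarrow> nat \<Rightarrow> complex) \<Rightarrow> complex" where
  "F_mat m n x = (\<Sum>i = 1..m. \<Sum>j = 1..n. x i j)"

definition central_charge :: "nat \<Rightarrow> nat \<Rightarrow> (nat \<Rightarrow> nat \<Rightarrow> complex) \<Rightarrow> complex" where
  "central_charge m n x = F_mat m n x - F_GT n m (gRSK_P m n x)"

definition gRSK_defined :: "nat \<Rightarrow> nat \<Rightarrow> (nat \<Rightarrow> nat \<Rightarrow> complex) \<Rightarrow> bool" where
  "gRSK_defined m n x \<longleftrightarrow>
     (\<forall>i j. 1 \<le> i \<and> i \<le> m \<and> i \<le> j \<and> j \<le> n \<longrightarrow>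
        minor_int i j (Mprod n x m) \<noteq> 0 \<and> minor_int (i + 1) j (Mprod n x m) \<noteq> 0)
   \<and> (\<forall>j' i'. 1 \<le> j' \<and> j' \<le> n \<and> j' \<le> i' \<and> i' \<le> m \<longrightarrow>
        minor_int j' n (Mprod n x i') \<noteq> 0 \<and> minor_int (j' + 1) n (Mprod n x i') \<noteq> 0)"

text \<open>Polynomials in the variables x_a^j (1 <= a <= m, 1 <= j <= n) with real coefficients:
  a coefficient function on exponent arrays, finitely supported, supported on exponent arrays
  vanishing outside [1,m] x [1,n].\<close>
definition is_poly :: "nat \<Rightarrow> nat \<Rightarrow> ((nat \<Rightarrow> nat \<Rightarrow> nat) \<Rightarrow> real) \<Rightarrow> bool" where
  "is_poly m n p \<longleftrightarrow> finite {e. p e \<noteq> 0} \<and>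
     (\<forall>e. p e \<noteq> 0 \<longrightarrow> (\<forall>a j. \<not> (1 \<le> a \<and> a \<le> m \<and> 1 \<le> j \<and> j \<le> n) \<longrightarrow> e a j = 0))"

definition poly_eval :: "nat \<Rightarrow> nat \<Rightarrow> ((nat \<Rightarrow> nat \<Rightarrow> nat) \<Rightarrow> real) \<Rightarrow> (nat \<Rightarrow> nat \<Rightarrow> complex) \<Rightarrow> complex" where
  "poly_eval m n p x = (\<Sum>e\<in>{e. p e \<noteq> 0}. of_real (p e) * (\<Prod>a = 1..m. \<Prod>j = 1..n. x a j ^ e a j))"

definition nonneg_poly :: "nat \<Rightarrow> nat \<Rightarrow> ((nat \<Rightarrow> nat \<Rightarrow> nat) \<Rightarrow> real) \<Rightarrow> bool" where
  "nonneg_poly m n p \<longleftrightarrow> is_poly m n p \<and> (\<forall>e. p e \<ge> 0)"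

end

theory Submission
  imports Defs
begin

text \<open>Write \<open>\<tau>\<^sub>k(i, j)\<close> for the minor \<open>\<Delta>\<^bsub>[i,j]\<^esub>\<close> of \<open>M(x\<^sub>1,\<dots>,x\<^sub>k)\<close>, so that the entries of
  \<open>P\<close> and \<open>Q\<close> are ratios \<open>\<tau>\<^sub>k(i, j) / \<tau>\<^sub>k(i + 1, j)\<close> taken at \<open>k = m\<close> and at \<open>j = n\<close>.
  Bordering \<open>A W(y)\<close> by one row and applying the Desnanot--Jacobi identity gives a three-term
  exchange relation between the minors of \<open>M(x\<^sub>1,\<dots>,x\<^sub>k)\<close> and of \<open>M(x\<^sub>1,\<dots>,x\<^sub>k\<^sub>-\<^sub>1)\<close>.
  Using it, the mixed second difference in the shape \<open>(m, n)\<close> of \<open>F(P) + F(Q) + \<delta>\<^sub>m\<^sub>,\<^sub>n z\<^sub>n\<^sub>,\<^sub>n\<close>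
  is the single entry \<open>x\<^sub>m\<^sup>n\<close>, and summing over the rectangle gives \<open>F(x)\<close>.

  This argument needs every minor to be nonzero. The minors are polynomials that are positive at the
  all-ones matrix, so the identity holds at all but finitely many points of the segment from \<open>x\<close> to
  it and passes to \<open>x\<close> by continuity, using only that gRSK is defined at \<open>x\<close>.

  Finally, expanding \<open>M(x\<^sub>1,\<dots>,x\<^sub>k\<^sub>+\<^sub>1) = M(x\<^sub>1,\<dots>,x\<^sub>k) W(x\<^sub>k\<^sub>+\<^sub>1)\<close> column by column shows that
  every minor is a polynomial with nonnegative coefficients; \<open>F(Q) + \<delta>\<^sub>m\<^sub>,\<^sub>n z\<^sub>n\<^sub>,\<^sub>n\<close> is a sum of
  ratios of such minors.\<close>

section \<open>The decoration identity for families of minors\<close>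

lemma sum_If_le_eq_sum_min:
  fixes h :: "nat \<Rightarrow> 'a::comm_monoid_add"
  shows "(\<Sum>i=1..K. if i \<le> N then h i else 0) = (\<Sum>i=1..min K N. h i)"
proof -
  have "{1..K} \<inter> {i. i \<le> N} = {1..min K N}" by auto
  then show ?thesis by (simp add: sum.If_cases)
qed

lemma sum_If_le_eq_sum:
  fixes h :: "nat \<Rightarrow> 'a::comm_monoid_add"
  assumes "s \<le> r"
  shows "(\<Sum>i=1..r. if i \<le> s then h i else 0) = (\<Sum>i=1..s. h i)"
  using sum_If_le_eq_sum_min[where h=h and K=r and N=s] assms by (simp add: min_absorb2)

lemma double_sum_rectangle_Suc:
  fixes f :: "nat \<Rightarrow> nat \<Rightarrow> 'a::ab_group_add"
  shows "(\<Sum>a=1..Suc m. \<Sum>c=1..Suc J. f a c) = (\<Sum>a=1..m. \<Sum>c=1..Suc J. f a c)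
     + (\<Sum>a=1..Suc m. \<Sum>c=1..J. f a c) - (\<Sum>a=1..m. \<Sum>c=1..J. f a c) + f (Suc m) (Suc J)"
  by (simp add: sum.distrib)

lemma F_GT_Suc_diff:
  assumes "1 \<le> N"
  shows "F_GT (Suc N) K z - F_GT N K z = (\<Sum>i=1..min K N. z i (Suc N) / z i N)
     + (\<Sum>i=1..min (K-1) N. z i N / z (Suc i) (Suc N)) + (if K = N then z K K else 0)"
proof -
  have row: "(\<Sum>j=i..Suc N - 1. g j) = (\<Sum>j=i..N - 1. g j) + (if i \<le> N then g N else 0)"
    for i and g :: "nat \<Rightarrow> complex"
    using assms by (cases N) simp_all
  have s1: "(\<Sum>i=1..K. \<Sum>j=i..Suc N - 1. z i (j+1) / z i j) =
      (\<Sum>i=1..K. \<Sum>j=i..N - 1. z i (j+1) / z i j) + (\<Sum>i=1..min K N. z i (Suc N) / z i N)"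
    unfolding row sum.distrib sum_If_le_eq_sum_min by simp
  have s2: "(\<Sum>i=1..K-1. \<Sum>j=i..Suc N - 1. z i j / z (i+1) (j+1)) =
      (\<Sum>i=1..K-1. \<Sum>j=i..N - 1. z i j / z (i+1) (j+1)) + (\<Sum>i=1..min (K-1) N. z i N / z (Suc i) (Suc N))"
    unfolding row sum.distrib sum_If_le_eq_sum_min by simp
  show ?thesis unfolding F_GT_def s1 s2 using assms by auto
qed

text \<open>With \<open>a\<close>, \<open>b\<close>, \<open>c\<close>, \<open>d\<close> the ratio columns of the shapes \<open>(m - 1, J)\<close>, \<open>(m - 1, J - 1)\<close>,
  \<open>(m, J - 1)\<close>, \<open>(m, J)\<close>, this is the mixed second difference of \<open>PQ_decoration\<close> below.\<close>

definition mixed_difference_sum ::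
    "nat \<Rightarrow> nat \<Rightarrow> (nat \<Rightarrow> complex) \<Rightarrow> (nat \<Rightarrow> complex) \<Rightarrow> (nat \<Rightarrow> complex) \<Rightarrow> (nat \<Rightarrow> complex) \<Rightarrow> complex"
  where "mixed_difference_sum m J a b c d =
     (\<Sum>i=1..min m (J-1). d i / c i) + (\<Sum>i=1..min (m-1) (J-1). c i / d (Suc i))
     - (\<Sum>i=1..min (m-1) (J-1). a i / b i) - (\<Sum>i=1..min (m-2) (J-1). b i / a (Suc i))
     + (\<Sum>i=1..min J (m-1). d i / a i) + (\<Sum>i=1..min (J-1) (m-1). a i / d (Suc i))
     - (\<Sum>i=1..min (J-1) (m-1). c i / b i) - (\<Sum>i=1..min (J-2) (m-1). b i / c (Suc i))
     + (if m = J then d J - b (J-1) else 0)"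

text \<open>\<open>V\<close> abstracts the cross-ratio of the four minors at the corner \<open>(m, J)\<close>; the hypotheses are the
  relations that the exchange relation imposes on it.\<close>

context
  fixes a b c d V :: "nat \<Rightarrow> complex" and y :: complex and m J :: nat
  assumes m2: "2 \<le> m" and J2: "2 \<le> J"
    and V_1: "V 1 = y"
    and V_Suc: "\<And>i. 1 \<le> i \<Longrightarrow> i < min m J \<Longrightarrow> V (Suc i) = (a i + c i) / b i"
    and V_split: "\<And>i. 1 \<le> i \<Longrightarrow> i \<le> min m J \<Longrightarrow> \<not> (m = J \<and> i = J) \<Longrightarrow>
      (if i \<le> min J (m-1) then d i / a i else 0) + (if i \<le> min m (J-1) then d i / c i else 0) = V i"
    and V_diag: "m = J \<Longrightarrow> V J = d J"
    and d_nonzero: "\<And>i. 1 \<le> i \<Longrightarrow> i \<le> min m J \<Longrightarrow> d i \<noteq> 0"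
    and b_nonzero: "\<And>i. 1 \<le> i \<Longrightarrow> i < min m J \<Longrightarrow> b i \<noteq> 0"
begin

lemma corner_sums_over_d:
  "(\<Sum>i=1..min m (J-1). d i / c i) + (\<Sum>i=1..min J (m-1). d i / a i)
     = y + (\<Sum>i=1..min m J - 1. (a i + c i) / b i) - (if m = J then d J else 0)"
proof -
  define r where "r = min m J"
  define T where "T i = (if i \<le> min J (m-1) then d i / a i else 0) + (if i \<le> min m (J-1) then d i / c i else 0)" for i
  have r2: "2 \<le> r" using m2 J2 by (simp add: r_def)
  have T_eq: "T i = V i - (if m = J \<and> i = J then V i else 0)" if "i \<in> {1..r}" for i
    using V_split[of i] that J2 by (auto simp: T_def r_def)
  have "(\<Sum>i=1..min m (J-1). d i / c i) + (\<Sum>i=1..min J (m-1). d i / a i) = (\<Sum>i=1..r. T i)"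
    unfolding T_def sum.distrib by (subst (1 2) sum_If_le_eq_sum) (auto simp: r_def)
  also have "\<dots> = (\<Sum>i=1..r. V i) - (\<Sum>i=1..r. if m = J \<and> i = J then V i else 0)"
    using T_eq by (simp add: sum_subtractf)
  also have "(\<Sum>i=1..r. if m = J \<and> i = J then V i else 0) = (if m = J then d J else 0)"
    using V_diag J2 by (auto simp: r_def)
  also have "(\<Sum>i=1..r. V i) = V 1 + (\<Sum>i=1..r-1. V (Suc i))"
    using r2 by (simp add: sum.atLeast_Suc_atMost sum.shift_bounds_cl_Suc_ivl[symmetric])
  also have "(\<Sum>i=1..r-1. V (Suc i)) = (\<Sum>i=1..r-1. (a i + c i) / b i)"
    using r2 by (intro sum.cong refl V_Suc) (auto simp: r_def)
  finally show ?thesis using V_1 by (simp add: r_def)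
qed

lemma corner_sums_over_b:
  "(\<Sum>i=1..min m J - 1. (a i + c i) / d (Suc i))
     = (\<Sum>i=1..min (m-2) (J-1). b i / a (Suc i)) + (\<Sum>i=1..min (J-2) (m-1). b i / c (Suc i))
       + (if m = J then b (J-1) else 0)"
proof -
  define r where "r = min m J"
  have summand: "(a i + c i) / d (Suc i) = (if i \<le> min (m-2) (J-1) then b i / a (Suc i) else 0)
      + (if i \<le> min (J-2) (m-1) then b i / c (Suc i) else 0) + (if m = J \<and> i = J - 1 then b i else 0)"
    if i: "i \<in> {1..r-1}" for i
  proof -
    have i_lt: "1 \<le> i" "i < m" "i < J" using i by (auto simp: r_def min_def split: if_splits)
    have ac: "a i + c i = b i * V (Suc i)" and dS: "d (Suc i) \<noteq> 0"
      using V_Suc[of i] b_nonzero[of i] d_nonzero[of "Suc i"] i_lt by auto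
    show ?thesis
    proof (cases "m = J \<and> i = J - 1")
      case True
      then show ?thesis using ac dS V_diag i_lt by auto
    next
      case False
      then have not_diag: "\<not> (m = J \<and> Suc i = J)" using i_lt by auto
      define W where "W = (if Suc i \<le> min J (m-1) then 1 / a (Suc i) else 0)
        + (if Suc i \<le> min m (J-1) then 1 / c (Suc i) else 0)"
      have "V (Suc i) = d (Suc i) * W"
        using V_split[of "Suc i"] i_lt not_diag by (auto simp: W_def distrib_left)
      then have "(a i + c i) / d (Suc i) = b i * W" using ac dS by simp
      moreover have "(Suc i \<le> min J (m-1)) = (i \<le> min (m-2) (J-1))"
        "(Suc i \<le> min m (J-1)) = (i \<le> min (J-2) (m-1))" using m2 J2 by auto
      moreover have "(if m = J \<and> i = J - 1 then b i else 0) = 0" using False by auto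
      ultimately show ?thesis by (simp add: W_def distrib_left)
    qed
  qed
  have "(\<Sum>i=1..r-1. (a i + c i) / d (Suc i)) = (\<Sum>i=1..r-1. if i \<le> min (m-2) (J-1) then b i / a (Suc i) else 0)
      + (\<Sum>i=1..r-1. if i \<le> min (J-2) (m-1) then b i / c (Suc i) else 0)
      + (\<Sum>i=1..r-1. if m = J \<and> i = J - 1 then b i else 0)"
    by (simp add: summand sum.distrib)
  also have "(\<Sum>i=1..r-1. if m = J \<and> i = J - 1 then b i else 0) = (if m = J then b (J-1) else 0)"
    using J2 by (auto simp: r_def)
  finally show ?thesis
    by (subst (asm) (1 2) sum_If_le_eq_sum) (auto simp: r_def)
qed

lemma corner_identity: "mixed_difference_sum m J a b c d = y"
proof -
  have r: "min (m-1) (J-1) = min m J - 1" "min (J-1) (m-1) = min m J - 1" by auto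
  have "(\<Sum>i=1..min (m-1) (J-1). c i / d (Suc i)) + (\<Sum>i=1..min (J-1) (m-1). a i / d (Suc i))
      = (\<Sum>i=1..min m J - 1. (a i + c i) / d (Suc i))"
    unfolding r by (simp add: sum.distrib[symmetric] add_divide_distrib add.commute)
  moreover have "(\<Sum>i=1..min (m-1) (J-1). a i / b i) + (\<Sum>i=1..min (J-1) (m-1). c i / b i)
      = (\<Sum>i=1..min m J - 1. (a i + c i) / b i)"
    unfolding r by (simp add: sum.distrib[symmetric] add_divide_distrib)
  ultimately show ?thesis
    using corner_sums_over_d corner_sums_over_b by (auto simp: mixed_difference_sum_def algebra_simps)
qed

end

definition tau_ratio :: "(nat \<Rightarrow> nat \<Rightarrow> nat \<Rightarrow> complex) \<Rightarrow> nat \<Rightarrow> nat \<Rightarrow> nat \<Rightarrow> complex" where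
  "tau_ratio \<tau> k i j = \<tau> k i j / \<tau> k (Suc i) j"

definition PQ_decoration :: "(nat \<Rightarrow> nat \<Rightarrow> nat \<Rightarrow> complex) \<Rightarrow> nat \<Rightarrow> nat \<Rightarrow> complex" where
  "PQ_decoration \<tau> m J = F_GT J m (tau_ratio \<tau> m) + F_GT m J (\<lambda>i l. tau_ratio \<tau> l i J)
     + (if m = J then tau_ratio \<tau> m J J else 0)"

lemma PQ_decoration_mixed_difference:
  assumes "2 \<le> m" "2 \<le> J"
  shows "PQ_decoration \<tau> m J - PQ_decoration \<tau> (m-1) J - PQ_decoration \<tau> m (J-1) + PQ_decoration \<tau> (m-1) (J-1)
    = mixed_difference_sum m J (\<lambda>i. tau_ratio \<tau> (m-1) i J) (\<lambda>i. tau_ratio \<tau> (m-1) i (J-1))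
        (\<lambda>i. tau_ratio \<tau> m i (J-1)) (\<lambda>i. tau_ratio \<tau> m i J)"
proof -
  define m' J' where "m' = m - 1" and "J' = J - 1"
  have m: "m = Suc m'" "1 \<le> m'" and J: "J = Suc J'" "1 \<le> J'" using assms by (auto simp: m'_def J'_def)
  define z where "z = tau_ratio \<tau>"
  have P_diff: "F_GT J k (z k) - F_GT J' k (z k) = (\<Sum>i=1..min k J'. z k i J / z k i J')
      + (\<Sum>i=1..min (k-1) J'. z k i J' / z k (Suc i) J) + (if k = J' then z k k k else 0)" for k
    using F_GT_Suc_diff[OF J(2), of k "z k"] by (simp add: J(1))
  have Q_diff: "F_GT m j (\<lambda>i l. z l i j) - F_GT m' j (\<lambda>i l. z l i j) = (\<Sum>i=1..min j m'. z m i j / z m' i j)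
      + (\<Sum>i=1..min (j-1) m'. z m' i j / z m (Suc i) j) + (if j = m' then z j j j else 0)" for j
    using F_GT_Suc_diff[OF m(2), of j "\<lambda>i l. z l i j"] by (simp add: m(1))
  have diag: "(if m = J' then z m m m else 0) - (if m' = J' then z m' m' m' else 0)
     + (if J = m' then z J J J else 0) - (if J' = m' then z J' J' J' else 0)
     + (if m = J then z m J J else 0) - (if m' = J then z m' J J else 0)
     - (if m = J' then z m J' J' else 0) + (if m' = J' then z m' J' J' else 0)
     = (if m = J then z m J J - z m' J' J' else 0)"
    using m J by auto
  have "PQ_decoration \<tau> m J - PQ_decoration \<tau> m' J - PQ_decoration \<tau> m J' + PQ_decoration \<tau> m' J' =
       (F_GT J m (z m) - F_GT J' m (z m)) - (F_GT J m' (z m') - F_GT J' m' (z m'))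
     + (F_GT m J (\<lambda>i l. z l i J) - F_GT m' J (\<lambda>i l. z l i J))
     - (F_GT m J' (\<lambda>i l. z l i J') - F_GT m' J' (\<lambda>i l. z l i J'))
     + (if m = J then z m J J else 0) - (if m' = J then z m' J J else 0)
     - (if m = J' then z m J' J' else 0) + (if m' = J' then z m' J' J' else 0)"
    unfolding PQ_decoration_def z_def by (simp add: algebra_simps)
  also have "\<dots> = (\<Sum>i=1..min m J'. z m i J / z m i J') + (\<Sum>i=1..min m' J'. z m i J' / z m (Suc i) J)
     - (\<Sum>i=1..min m' J'. z m' i J / z m' i J') - (\<Sum>i=1..min (m'-1) J'. z m' i J' / z m' (Suc i) J)
     + (\<Sum>i=1..min J m'. z m i J / z m' i J) + (\<Sum>i=1..min J' m'. z m' i J / z m (Suc i) J)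
     - (\<Sum>i=1..min J' m'. z m i J' / z m' i J') - (\<Sum>i=1..min (J'-1) m'. z m' i J' / z m (Suc i) J')
     + ((if m = J' then z m m m else 0) - (if m' = J' then z m' m' m' else 0)
     + (if J = m' then z J J J else 0) - (if J' = m' then z J' J' J' else 0)
     + (if m = J then z m J J else 0) - (if m' = J then z m' J J else 0)
     - (if m = J' then z m J' J' else 0) + (if m' = J' then z m' J' J' else 0))"
    unfolding P_diff Q_diff using J'_def by (simp only: algebra_simps m(1) diff_Suc_1)
  also have "\<dots> = mixed_difference_sum m J (\<lambda>i. z m' i J) (\<lambda>i. z m' i J') (\<lambda>i. z m i J') (\<lambda>i. z m i J)"
    unfolding diag mixed_difference_sum_def using m J by simp
  finally show ?thesis unfolding z_def m'_def J'_def .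
qed

definition tau_cross_ratio :: "(nat \<Rightarrow> nat \<Rightarrow> nat \<Rightarrow> complex) \<Rightarrow> nat \<Rightarrow> nat \<Rightarrow> nat \<Rightarrow> complex" where
  "tau_cross_ratio \<tau> m J i = \<tau> m i J * \<tau> (m-1) i (J-1) / (\<tau> (m-1) i J * \<tau> m i (J-1))"

text \<open>\<open>\<tau> k i j\<close> plays the role of the minor \<open>\<Delta>\<^bsub>[i,j]\<^esub>\<close> of \<open>M(y\<^sub>1,\<dots>,y\<^sub>k)\<close>.\<close>

locale tau_family =
  fixes \<tau> :: "nat \<Rightarrow> nat \<Rightarrow> nat \<Rightarrow> complex" and y :: "nat \<Rightarrow> nat \<Rightarrow> complex" and M N :: nat
  assumes exchange: "\<And>k i j. 1 \<le> k \<Longrightarrow> k \<le> M \<Longrightarrow> 1 \<le> i \<Longrightarrow> i \<le> k \<Longrightarrow> i < j \<Longrightarrow> j \<le> N \<Longrightarrow>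
      \<tau> k (Suc i) j * \<tau> (k-1) i (j-1) = \<tau> (k-1) i j * \<tau> k (Suc i) (j-1) + \<tau> (k-1) (Suc i) j * \<tau> k i (j-1)"
  and first_row: "\<And>k j. k \<le> M \<Longrightarrow> j \<le> N \<Longrightarrow> \<tau> k 1 j = (\<Prod>a=1..k. \<Prod>c=1..j. y a c)"
  and empty_minor: "\<And>k j. \<tau> k (Suc j) j = 1"
  and band_edge: "\<And>k j. k \<le> M \<Longrightarrow> k < j \<Longrightarrow> j \<le> N \<Longrightarrow> \<tau> k (Suc k) j = 1"
  and below_band: "\<And>k i j. k \<le> M \<Longrightarrow> k + 2 \<le> i \<Longrightarrow> i \<le> j \<Longrightarrow> j \<le> N \<Longrightarrow> \<tau> k i j = 0"
  and nonzero: "\<And>k i j. k \<le> M \<Longrightarrow> j \<le> N \<Longrightarrow> 1 \<le> i \<Longrightarrow> i \<le> k + 1 \<Longrightarrow> i \<le> j + 1 \<Longrightarrow> \<tau> k i j \<noteq> 0"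
  and weight_nonzero: "\<And>a c. 1 \<le> a \<Longrightarrow> a \<le> M \<Longrightarrow> 1 \<le> c \<Longrightarrow> c \<le> N \<Longrightarrow> y a c \<noteq> 0"
begin

context
  fixes m J :: nat
  assumes m2: "2 \<le> m" and mM: "m \<le> M" and J2: "2 \<le> J" and JN: "J \<le> N"
begin

lemma tau_nonzero: "k \<le> m \<Longrightarrow> j \<le> J \<Longrightarrow> 1 \<le> i \<Longrightarrow> i \<le> k + 1 \<Longrightarrow> i \<le> j + 1 \<Longrightarrow> \<tau> k i j \<noteq> 0"
  using nonzero mM JN by simp

lemma tau_cross_ratio_1: "tau_cross_ratio \<tau> m J 1 = y m J"
proof -
  obtain m' J' where m: "m = Suc m'" and J: "J = Suc J'" using m2 J2 by (cases m; cases J) auto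
  have "\<tau> m 1 J = (\<Prod>c=1..J'. y m c) * y m J * \<tau> m' 1 J"
    and "\<tau> m 1 J' = (\<Prod>c=1..J'. y m c) * \<tau> m' 1 J'"
    using first_row[of m] first_row[of m'] mM JN by (simp_all add: m J prod.distrib)
  moreover have "(\<Prod>c=1..J'. y m c) \<noteq> 0" using weight_nonzero m2 mM JN J by auto
  moreover have "\<tau> m' 1 J \<noteq> 0" "\<tau> m' 1 J' \<noteq> 0" using tau_nonzero[of m' J 1] tau_nonzero[of m' J' 1] m J by auto
  ultimately show ?thesis unfolding tau_cross_ratio_def m J by (simp add: field_simps)
qed

lemma tau_cross_ratio_Suc:
  assumes "1 \<le> i" "i < min m J"
  shows "tau_cross_ratio \<tau> m J (Suc i)
    = (tau_ratio \<tau> (m-1) i J + tau_ratio \<tau> m i (J-1)) / tau_ratio \<tau> (m-1) i (J-1)"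
proof -
  define m' J' where "m' = m - 1" and "J' = J - 1"
  have ex: "\<tau> m (Suc i) J * \<tau> m' i J' = \<tau> m' i J * \<tau> m (Suc i) J' + \<tau> m' (Suc i) J * \<tau> m i J'"
    using exchange[of m i J] assms m2 mM JN by (simp add: m'_def J'_def)
  have nz: "\<tau> m' (Suc i) J \<noteq> 0" "\<tau> m (Suc i) J' \<noteq> 0" "\<tau> m' i J' \<noteq> 0" "\<tau> m' (Suc i) J' \<noteq> 0"
    using tau_nonzero[of m' J "Suc i"] tau_nonzero[of m J' "Suc i"] tau_nonzero[of m' J' i]
      tau_nonzero[of m' J' "Suc i"] assms by (auto simp: m'_def J'_def)
  have "tau_ratio \<tau> m' i J + tau_ratio \<tau> m i J'
      = (\<tau> m' i J * \<tau> m (Suc i) J' + \<tau> m' (Suc i) J * \<tau> m i J') / (\<tau> m' (Suc i) J * \<tau> m (Suc i) J')"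
    using nz by (simp add: tau_ratio_def field_simps)
  also have "\<dots> = \<tau> m (Suc i) J * \<tau> m' i J' / (\<tau> m' (Suc i) J * \<tau> m (Suc i) J')"
    by (simp only: ex)
  finally have numerator: "tau_ratio \<tau> m' i J + tau_ratio \<tau> m i J'
      = \<tau> m (Suc i) J * \<tau> m' i J' / (\<tau> m' (Suc i) J * \<tau> m (Suc i) J')" .
  show ?thesis unfolding m'_def[symmetric] J'_def[symmetric] numerator
    using nz by (simp add: tau_cross_ratio_def tau_ratio_def m'_def J'_def field_simps)
qed

lemma tau_cross_ratio_split:
  assumes i: "1 \<le> i" "i \<le> min m J" and not_corner: "\<not> (m = J \<and> i = J)"
  shows "(if i \<le> min J (m-1) then tau_ratio \<tau> m i J / tau_ratio \<tau> (m-1) i J else 0)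
      + (if i \<le> min m (J-1) then tau_ratio \<tau> m i J / tau_ratio \<tau> m i (J-1) else 0)
    = tau_cross_ratio \<tau> m J i"
proof -
  define m' J' where "m' = m - 1" and "J' = J - 1"
  have m: "m = Suc m'" and J: "J = Suc J'" using m2 J2 by (auto simp: m'_def J'_def)
  have nz: "\<tau> m' i J \<noteq> 0" "\<tau> m i J' \<noteq> 0" "\<tau> m (Suc i) J \<noteq> 0" "\<tau> m i J \<noteq> 0"
    using tau_nonzero[of m' J i] tau_nonzero[of m J' i] tau_nonzero[of m J "Suc i"] tau_nonzero[of m J i] i
    by (auto simp: m'_def J'_def)
  consider (inner) "i < J" "i < m" | (last_column) "i = J" "i < m" | (last_row) "i = m" "i < J"
    using i not_corner by linarith
  then show ?thesis
  proof cases
    case inner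
    have ex: "\<tau> m (Suc i) J * \<tau> m' i J' = \<tau> m' i J * \<tau> m (Suc i) J' + \<tau> m' (Suc i) J * \<tau> m i J'"
      using exchange[of m i J] inner i m2 mM JN by (simp add: m'_def J'_def)
    have nz': "\<tau> m' (Suc i) J \<noteq> 0" "\<tau> m (Suc i) J' \<noteq> 0"
      using tau_nonzero[of m' J "Suc i"] tau_nonzero[of m J' "Suc i"] inner by (auto simp: m J)
    have "tau_ratio \<tau> m i J / tau_ratio \<tau> m' i J + tau_ratio \<tau> m i J / tau_ratio \<tau> m i J'
        = \<tau> m i J / \<tau> m (Suc i) J * ((\<tau> m' i J * \<tau> m (Suc i) J' + \<tau> m' (Suc i) J * \<tau> m i J') / (\<tau> m' i J * \<tau> m i J'))"
      using nz nz' by (simp add: tau_ratio_def field_simps)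
    also have "\<dots> = \<tau> m i J / \<tau> m (Suc i) J * (\<tau> m (Suc i) J * \<tau> m' i J' / (\<tau> m' i J * \<tau> m i J'))"
      by (simp only: ex)
    also have "\<dots> = tau_cross_ratio \<tau> m J i"
      using nz by (simp add: tau_cross_ratio_def m'_def J'_def)
    finally show ?thesis using inner by (auto simp: m'_def J'_def)
  next
    case last_column
    have "\<tau> m (Suc J) J = 1" "\<tau> m' (Suc J) J = 1" "\<tau> m' J J' = 1" "\<tau> m J J' = 1"
      using empty_minor J by auto
    moreover have "J \<le> m'" "\<not> J \<le> J'" using last_column m J by auto
    ultimately show ?thesis using last_column nz
      unfolding tau_cross_ratio_def tau_ratio_def m'_def[symmetric] J'_def[symmetric] by (simp add: field_simps)
  next
    case last_row
    have "\<tau> m (Suc m) J * \<tau> m' m J' = \<tau> m' m J * \<tau> m (Suc m) J' + \<tau> m' (Suc m) J * \<tau> m m J'"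
      using exchange[of m m J] last_row m2 mM JN by (simp add: m'_def J'_def)
    moreover have "\<tau> m' m J = 1" "\<tau> m' (Suc m) J = 0"
      using band_edge[of m' J] below_band[of m' "Suc m" J] last_row mM JN by (auto simp: m)
    moreover have "\<tau> m (Suc m) J \<noteq> 0" using tau_nonzero[of m J "Suc m"] last_row by simp
    moreover have "m \<le> J'" using last_row J by simp
    ultimately show ?thesis using last_row nz
      unfolding tau_cross_ratio_def tau_ratio_def m'_def[symmetric] J'_def[symmetric] by (simp add: field_simps)
  qed
qed

lemma tau_cross_ratio_corner: "m = J \<Longrightarrow> tau_cross_ratio \<tau> m J J = tau_ratio \<tau> m J J"
proof -
  obtain m' J' where m: "m = Suc m'" and J: "J = Suc J'" using m2 J2 by (cases m; cases J) auto
  assume "m = J"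
  then show ?thesis using empty_minor[of m J] empty_minor[of m J'] empty_minor[of m' J'] band_edge[of m' J] mM JN
    by (simp add: tau_cross_ratio_def tau_ratio_def m J)
qed

lemma PQ_decoration_mixed_difference_eq_weight:
  "PQ_decoration \<tau> m J - PQ_decoration \<tau> (m-1) J - PQ_decoration \<tau> m (J-1) + PQ_decoration \<tau> (m-1) (J-1) = y m J"
  unfolding PQ_decoration_mixed_difference[OF m2 J2]
proof (rule corner_identity[where V = "tau_cross_ratio \<tau> m J" and y = "y m J", OF m2 J2 tau_cross_ratio_1])
  show "\<And>i. 1 \<le> i \<Longrightarrow> i < min m J \<Longrightarrow>
      tau_cross_ratio \<tau> m J (Suc i) = (tau_ratio \<tau> (m-1) i J + tau_ratio \<tau> m i (J-1)) / tau_ratio \<tau> (m-1) i (J-1)"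
    by (rule tau_cross_ratio_Suc)
  show "\<And>i. 1 \<le> i \<Longrightarrow> i \<le> min m J \<Longrightarrow> \<not> (m = J \<and> i = J) \<Longrightarrow>
      (if i \<le> min J (m-1) then tau_ratio \<tau> m i J / tau_ratio \<tau> (m-1) i J else 0)
      + (if i \<le> min m (J-1) then tau_ratio \<tau> m i J / tau_ratio \<tau> m i (J-1) else 0) = tau_cross_ratio \<tau> m J i"
    by (rule tau_cross_ratio_split)
  show "m = J \<Longrightarrow> tau_cross_ratio \<tau> m J J = tau_ratio \<tau> m J J"
    by (rule tau_cross_ratio_corner)
  show "\<And>i. 1 \<le> i \<Longrightarrow> i \<le> min m J \<Longrightarrow> tau_ratio \<tau> m i J \<noteq> 0"
    using tau_nonzero by (simp add: tau_ratio_def)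
  show "\<And>i. 1 \<le> i \<Longrightarrow> i < min m J \<Longrightarrow> tau_ratio \<tau> (m-1) i (J-1) \<noteq> 0"
    using tau_nonzero by (simp add: tau_ratio_def)
qed

end

lemma tau_ratio_first_row:
  assumes "1 \<le> M" "1 \<le> j" "j \<le> N"
  shows "tau_ratio \<tau> 1 1 j = (\<Prod>c=1..j. y 1 c)"
proof -
  have "\<tau> 1 2 j = 1"
    using empty_minor[of 1 1] band_edge[of 1 j] assms by (cases "j = 1") (simp_all add: numeral_2_eq_2)
  then show ?thesis using first_row[of 1 j] assms by (simp add: tau_ratio_def numeral_2_eq_2)
qed

lemma tau_ratio_first_column: "k \<le> M \<Longrightarrow> 1 \<le> N \<Longrightarrow> tau_ratio \<tau> k 1 1 = (\<Prod>a=1..k. y a 1)"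
  using first_row[of k 1] empty_minor[of k 1] by (simp add: tau_ratio_def)

lemma PQ_decoration_single_row:
  assumes "1 \<le> M" "1 \<le> J" "J \<le> N"
  shows "PQ_decoration \<tau> 1 J = (\<Sum>c=1..J. y 1 c)"
proof -
  have step: "tau_ratio \<tau> 1 1 (Suc j) / tau_ratio \<tau> 1 1 j = y 1 (Suc j)" if "1 \<le> j" "j < J" for j
  proof -
    have "(\<Prod>c=1..j. y 1 c) \<noteq> 0" using weight_nonzero assms that by auto
    then show ?thesis using tau_ratio_first_row[of j] tau_ratio_first_row[of "Suc j"] assms that by simp
  qed
  have "(\<Sum>j=1..J-1. tau_ratio \<tau> 1 1 (Suc j) / tau_ratio \<tau> 1 1 j) = (\<Sum>j=1..J-1. y 1 (Suc j))"
    using step by (intro sum.cong) auto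
  then have "PQ_decoration \<tau> 1 J = (\<Sum>j=1..J-1. y 1 (Suc j)) + y 1 1"
    using assms tau_ratio_first_row[of 1] by (cases "J = 1") (simp_all add: PQ_decoration_def F_GT_def)
  also have "\<dots> = (\<Sum>c=1..J. y 1 c)"
    using assms sum.atLeast_Suc_atMost[of 1 J "y 1"] sum.shift_bounds_cl_Suc_ivl[of "y 1" 1 "J-1"] by simp
  finally show ?thesis .
qed

lemma PQ_decoration_single_column:
  assumes "1 \<le> m" "m \<le> M" "1 \<le> N"
  shows "PQ_decoration \<tau> m 1 = (\<Sum>a=1..m. y a 1)"
proof -
  have step: "tau_ratio \<tau> (Suc k) 1 1 / tau_ratio \<tau> k 1 1 = y (Suc k) 1" if "1 \<le> k" "k < m" for k
  proof -
    have "(\<Prod>a=1..k. y a 1) \<noteq> 0" using weight_nonzero assms that by auto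
    then show ?thesis using tau_ratio_first_column[of k] tau_ratio_first_column[of "Suc k"] assms that by simp
  qed
  have "(\<Sum>k=1..m-1. tau_ratio \<tau> (Suc k) 1 1 / tau_ratio \<tau> k 1 1) = (\<Sum>k=1..m-1. y (Suc k) 1)"
    using step by (intro sum.cong) auto
  then have "PQ_decoration \<tau> m 1 = (\<Sum>k=1..m-1. y (Suc k) 1) + y 1 1"
    using assms tau_ratio_first_column[of 1] by (cases "m = 1") (simp_all add: PQ_decoration_def F_GT_def)
  also have "\<dots> = (\<Sum>a=1..m. y a 1)"
    using assms sum.atLeast_Suc_atMost[of 1 m "\<lambda>a. y a 1"] sum.shift_bounds_cl_Suc_ivl[of "\<lambda>a. y a 1" 1 "m-1"] by simp
  finally show ?thesis .
qed

theorem sum_weights_eq_PQ_decoration: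
  assumes "1 \<le> m" "m \<le> M" "1 \<le> J" "J \<le> N"
  shows "(\<Sum>a=1..m. \<Sum>c=1..J. y a c) = PQ_decoration \<tau> m J"
  using assms
proof (induction "m + J" arbitrary: m J rule: less_induct)
  case less
  consider "m = 1" | "J = 1" | "2 \<le> m" "2 \<le> J" using less.prems by linarith
  then show ?case
  proof cases
    case 1
    then show ?thesis using PQ_decoration_single_row less.prems by simp
  next
    case 2
    then show ?thesis using PQ_decoration_single_column less.prems by simp
  next
    case 3
    obtain m' J' where m: "m = Suc m'" and J: "J = Suc J'" using 3 by (cases m; cases J) auto
    have "(\<Sum>a=1..m'. \<Sum>c=1..Suc J'. y a c) = PQ_decoration \<tau> m' (Suc J')"
      and "(\<Sum>a=1..Suc m'. \<Sum>c=1..J'. y a c) = PQ_decoration \<tau> (Suc m') J'"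
      and "(\<Sum>a=1..m'. \<Sum>c=1..J'. y a c) = PQ_decoration \<tau> m' J'"
      by (rule less.hyps; use less.prems 3 in \<open>simp add: m J\<close>)+
    moreover have "PQ_decoration \<tau> (Suc m') (Suc J') - PQ_decoration \<tau> m' (Suc J')
        - PQ_decoration \<tau> (Suc m') J' + PQ_decoration \<tau> m' J' = y (Suc m') (Suc J')"
      using PQ_decoration_mixed_difference_eq_weight[of m J] 3 less.prems by (simp add: m J)
    ultimately show ?thesis unfolding m J double_sum_rectangle_Suc by (simp add: algebra_simps)
  qed
qed

end

section \<open>Minors of products of the matrices \<open>W(y)\<close>\<close>

lemma Wmat_carrier [simp]: "Wmat n y \<in> carrier_mat n n"
  unfolding Wmat_def by simp

lemma Wmat_dim [simp]: "dim_row (Wmat n y) = n" "dim_col (Wmat n y) = n"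
  unfolding Wmat_def by simp_all

lemma Mprod_carrier [simp]: "Mprod n x k \<in> carrier_mat n n"
  by (induction k) auto

lemma mult_Wmat_index:
  assumes A: "A \<in> carrier_mat n n" and i: "i < n" and j: "j < n"
  shows "(A * Wmat n y) $$ (i, j) = y (Suc j) * A $$ (i, j) + (if Suc j < n then A $$ (i, Suc j) else 0)"
proof -
  have "(A * Wmat n y) $$ (i, j) = (\<Sum>l<n. A $$ (i, l) * Wmat n y $$ (l, j))"
    using A i j by (simp add: index_mult_mat(1) carrier_matD scalar_prod_def lessThan_atLeast0)
  also have "\<dots> = (\<Sum>l<n. (if l = j then y (Suc j) * A $$ (i, j) else 0) + (if l = Suc j then A $$ (i, Suc j) else 0))"
    by (rule sum.cong) (use j in \<open>auto simp: Wmat_def\<close>)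
  finally show ?thesis using j by (simp add: sum.distrib)
qed

lemma Mprod_Suc_index:
  "i < n \<Longrightarrow> j < n \<Longrightarrow> Mprod n x (Suc k) $$ (i, j)
    = x (Suc k) (Suc j) * Mprod n x k $$ (i, j) + (if Suc j < n then Mprod n x k $$ (i, Suc j) else 0)"
  using mult_Wmat_index[OF Mprod_carrier] by simp

lemma Mprod_outside_band: "r < n \<Longrightarrow> c < n \<Longrightarrow> r < c \<or> c + k < r \<Longrightarrow> Mprod n x k $$ (r, c) = 0"
proof (induction k arbitrary: r c)
  case (Suc k)
  have "Mprod n x k $$ (r, c) = 0" "Suc c < n \<Longrightarrow> Mprod n x k $$ (r, Suc c) = 0"
    using Suc by auto
  then show ?case using Mprod_Suc_index[OF Suc.prems(1,2)] by simp
qed auto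

lemma Mprod_band_edge: "c + k < n \<Longrightarrow> Mprod n x k $$ (c + k, c) = 1"
proof (induction k arbitrary: c)
  case (Suc k)
  have "Mprod n x k $$ (c + Suc k, c) = 0" by (rule Mprod_outside_band) (use Suc.prems in auto)
  moreover have "Mprod n x k $$ (c + Suc k, Suc c) = 1" using Suc.IH[of "Suc c"] Suc.prems by simp
  ultimately show ?case using Mprod_Suc_index[of "c + Suc k" n c x k] Suc.prems by simp
qed simp

lemma Mprod_diag: "c < n \<Longrightarrow> Mprod n x k $$ (c, c) = (\<Prod>a=1..k. x a (Suc c))"
proof (induction k)
  case (Suc k)
  have "Suc c < n \<Longrightarrow> Mprod n x k $$ (c, Suc c) = 0" by (rule Mprod_outside_band) auto
  then show ?case using Mprod_Suc_index[of c n c x k] Suc by (simp add: mult.commute)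
qed simp

lemma det_upper_triangular_prod:
  assumes "upper_triangular A" "A \<in> carrier_mat n n"
  shows "det A = (\<Prod>i<n. A $$ (i, i))"
  using det_upper_triangular[OF assms] assms(2) by (simp add: prod_list_diag_prod atLeast0LessThan)

lemma det_lower_triangular_prod:
  assumes "\<And>i j. i < j \<Longrightarrow> j < n \<Longrightarrow> A $$ (i, j) = 0" "A \<in> carrier_mat n n"
  shows "det A = (\<Prod>i<n. A $$ (i, i))"
  using det_lower_triangular[OF assms] assms(2) by (simp add: prod_list_diag_prod atLeast0LessThan)

lemma minor_int_empty: "minor_int (Suc j) j A = 1"
  unfolding minor_int_def by simp

lemma minor_int_Mprod_first_rows:
  assumes "j \<le> n"
  shows "minor_int 1 j (Mprod n x k) = (\<Prod>a=1..k. \<Prod>c=1..j. x a c)"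
proof -
  have "minor_int 1 j (Mprod n x k) = (\<Prod>c<j. Mprod n x k $$ (c, c))"
    unfolding minor_int_def
    by (subst det_lower_triangular_prod[of j]) (use assms in \<open>auto intro: Mprod_outside_band\<close>)
  also have "\<dots> = (\<Prod>c<j. \<Prod>a=1..k. x a (Suc c))"
    using assms by (intro prod.cong) (auto simp: Mprod_diag)
  also have "\<dots> = (\<Prod>c=1..j. \<Prod>a=1..k. x a c)"
    by (simp add: prod.atLeast1_atMost_eq lessThan_atLeast0)
  finally show ?thesis by (rule trans) (rule prod.swap)
qed

lemma minor_int_Mprod_band_edge:
  assumes "k < j" "j \<le> n"
  shows "minor_int (Suc k) j (Mprod n x k) = 1"
proof -
  have "minor_int (Suc k) j (Mprod n x k) = (\<Prod>r<j - k. Mprod n x k $$ (k + r, r))"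
    unfolding minor_int_def using assms
    by (subst det_upper_triangular_prod[of _ "j - k"]) (auto simp: upper_triangular_def intro: Mprod_outside_band)
  also have "\<dots> = 1"
    using assms Mprod_band_edge[of _ k n x] by (intro prod.neutral) (simp add: add.commute)
  finally show ?thesis .
qed

lemma minor_int_Mprod_below_band:
  assumes "k + 2 \<le> i" "i \<le> j" "j \<le> n"
  shows "minor_int i j (Mprod n x k) = 0"
proof -
  have "minor_int i j (Mprod n x k) = (\<Prod>r<j + 1 - i. Mprod n x k $$ (i - 1 + r, r))"
    unfolding minor_int_def using assms
    by (subst det_upper_triangular_prod[of _ "j + 1 - i"]) (auto simp: upper_triangular_def intro: Mprod_outside_band)
  also have "\<dots> = 0"
    using assms Mprod_outside_band[of "i - 1" n 0 k x] by (intro prod_zero bexI[of _ 0]) auto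
  finally show ?thesis .
qed

lemma det_single_entry_col:
  assumes A: "A \<in> carrier_mat N N" and j: "j < N" and p: "p < N"
    and zero: "\<And>r. r < N \<Longrightarrow> r \<noteq> p \<Longrightarrow> A $$ (r, j) = 0"
  shows "det A = A $$ (p, j) * cofactor A p j"
proof -
  have "det A = (\<Sum>r<N. A $$ (r, j) * cofactor A r j)" by (rule laplace_expansion_column[OF A j])
  also have "\<dots> = (\<Sum>r<N. if r = p then A $$ (p, j) * cofactor A p j else 0)"
    by (rule sum.cong) (use zero in auto)
  finally show ?thesis using p by simp
qed

lemma det_single_entry_row:
  assumes A: "A \<in> carrier_mat N N" and i: "i < N" and p: "p < N"
    and zero: "\<And>c. c < N \<Longrightarrow> c \<noteq> p \<Longrightarrow> A $$ (i, c) = 0"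
  shows "det A = A $$ (i, p) * cofactor A i p"
proof -
  have "det A = (\<Sum>c<N. A $$ (i, c) * cofactor A i c)" by (rule laplace_expansion_row[OF A i])
  also have "\<dots> = (\<Sum>c<N. if c = p then A $$ (i, p) * cofactor A i p else 0)"
    by (rule sum.cong) (use zero in auto)
  finally show ?thesis using p by simp
qed

lemma det_two_entries_row:
  assumes A: "A \<in> carrier_mat N N" and i: "i < N" and p: "p < N" and q: "q < N" and "p \<noteq> q"
    and zero: "\<And>c. c < N \<Longrightarrow> c \<noteq> p \<Longrightarrow> c \<noteq> q \<Longrightarrow> A $$ (i, c) = 0"
  shows "det A = A $$ (i, p) * cofactor A i p + A $$ (i, q) * cofactor A i q"
proof -
  have "det A = (\<Sum>c<N. A $$ (i, c) * cofactor A i c)" by (rule laplace_expansion_row[OF A i])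
  also have "\<dots> = (\<Sum>c<N. (if c = p then A $$ (i, p) * cofactor A i p else 0)
      + (if c = q then A $$ (i, q) * cofactor A i q else 0))"
    by (rule sum.cong) (use zero \<open>p \<noteq> q\<close> in auto)
  finally show ?thesis using p q by (simp add: sum.distrib)
qed

text \<open>The proof of the Desnanot--Jacobi identity below multiplies \<open>G\<close> by the identity matrix
  whose columns \<open>L\<close> and \<open>L + 1\<close> are replaced by columns \<open>0\<close> and \<open>L + 1\<close> of the adjugate.\<close>

definition jacobi_factor :: "'a :: comm_ring_1 mat \<Rightarrow> nat \<Rightarrow> 'a mat" where
  "jacobi_factor G L = mat (Suc (Suc L)) (Suc (Suc L)) (\<lambda>(r, c).
     if c = L then adj_mat G $$ (r, 0) else if c = Suc L then adj_mat G $$ (r, Suc L) else if r = c then 1 else 0)"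

lemma det_jacobi_factor:
  fixes G :: "'a :: comm_ring_1 mat"
  assumes G: "G \<in> carrier_mat (Suc (Suc L)) (Suc (Suc L))"
  shows "det (jacobi_factor G L) = (-1) ^ L *
    (det (mat_delete G 0 L) * det (mat_delete G (Suc L) (Suc L)) - det (mat_delete G 0 (Suc L)) * det (mat_delete G (Suc L) L))"
proof -
  define N where "N = Suc (Suc L)"
  define C where "C = adj_mat G"
  define K where "K = jacobi_factor G L"
  have K: "K \<in> carrier_mat N N" by (simp add: K_def jacobi_factor_def N_def)
  have C: "C $$ (r, c) = (-1) ^ (c + r) * det (mat_delete G c r)" if "r < N" "c < N" for r c
    using that G unfolding C_def adj_mat_def cofactor_def N_def by simp
  have minor: "det (mat_delete K (Suc L) c) = C $$ (L, if c = L then Suc L else 0)" if "c = L \<or> c = Suc L" for c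
  proof -
    have "det (mat_delete K (Suc L) c) = (\<Prod>r<Suc L. mat_delete K (Suc L) c $$ (r, r))"
      by (rule det_upper_triangular_prod)
        (use that in \<open>auto simp: upper_triangular_def mat_delete_def K_def jacobi_factor_def C_def\<close>)
    also have "\<dots> = (\<Prod>r<L. mat_delete K (Suc L) c $$ (r, r)) * mat_delete K (Suc L) c $$ (L, L)"
      by (simp add: lessThan_Suc mult.commute)
    also have "(\<Prod>r<L. mat_delete K (Suc L) c $$ (r, r)) = 1"
      using that by (intro prod.neutral) (auto simp: mat_delete_def K_def jacobi_factor_def)
    finally show ?thesis using that by (auto simp: mat_delete_def K_def jacobi_factor_def C_def)
  qed
  have "det K = K $$ (Suc L, L) * cofactor K (Suc L) L + K $$ (Suc L, Suc L) * cofactor K (Suc L) (Suc L)"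
    by (rule det_two_entries_row[OF K]) (auto simp: N_def K_def jacobi_factor_def)
  also have "\<dots> = C $$ (Suc L, 0) * (- C $$ (L, Suc L)) + C $$ (Suc L, Suc L) * C $$ (L, 0)"
    unfolding cofactor_def using minor[of L] minor[of "Suc L"]
    by (simp add: K_def jacobi_factor_def C_def)
  also have "\<dots> = (-1) ^ L * (det (mat_delete G 0 L) * det (mat_delete G (Suc L) (Suc L))
      - det (mat_delete G 0 (Suc L)) * det (mat_delete G (Suc L) L))"
    using C[of "Suc L" 0] C[of L "Suc L"] C[of "Suc L" "Suc L"] C[of L 0]
    by (simp add: N_def algebra_simps flip: power_add mult_2)
  finally show ?thesis unfolding K_def .
qed

lemma mult_jacobi_factor:
  fixes G :: "'a :: comm_ring_1 mat"
  assumes G: "G \<in> carrier_mat (Suc (Suc L)) (Suc (Suc L))"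
  shows "G * jacobi_factor G L = mat (Suc (Suc L)) (Suc (Suc L)) (\<lambda>(r, c).
    if c = L then (if r = 0 then det G else 0) else if c = Suc L then (if r = Suc L then det G else 0) else G $$ (r, c))"
    (is "_ = mat ?N ?N ?f")
proof -
  define K where "K = jacobi_factor G L"
  have K: "K \<in> carrier_mat ?N ?N" by (simp add: K_def jacobi_factor_def)
  have adjC: "adj_mat G \<in> carrier_mat ?N ?N" and adj: "G * adj_mat G = det G \<cdot>\<^sub>m 1\<^sub>m ?N"
    using adj_mat[OF G] by simp_all
  have "(G * K) $$ (r, c) = ?f (r, c)" if r: "r < ?N" and c: "c < ?N" for r c
  proof -
    have prod: "(G * K) $$ (r, c) = (\<Sum>l<?N. G $$ (r, l) * K $$ (l, c))"
      using r c G K by (simp add: index_mult_mat(1) carrier_matD scalar_prod_def lessThan_atLeast0)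
    show ?thesis
    proof (cases "c = L \<or> c = Suc L")
      case True
      define c' where "c' = (if c = L then 0 else Suc L)"
      have c': "c' < ?N" by (simp add: c'_def)
      have "(G * K) $$ (r, c) = (\<Sum>l<?N. G $$ (r, l) * adj_mat G $$ (l, c'))"
        unfolding prod by (rule sum.cong) (use True in \<open>auto simp: K_def jacobi_factor_def c'_def\<close>)
      also have "\<dots> = (G * adj_mat G) $$ (r, c')"
        using r c' G adjC by (simp add: index_mult_mat(1) carrier_matD scalar_prod_def lessThan_atLeast0)
      finally show ?thesis using r c c' True unfolding adj by (auto simp: c'_def)
    next
      case False
      have "(G * K) $$ (r, c) = (\<Sum>l<?N. if l = c then G $$ (r, c) else 0)"
        unfolding prod by (rule sum.cong) (use False c in \<open>auto simp: K_def jacobi_factor_def\<close>)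
      then show ?thesis using False r c by auto
    qed
  qed
  then show ?thesis unfolding K_def[symmetric] using G K by (intro eq_matI) auto
qed

lemma det_mult_jacobi_factor:
  fixes G :: "'a :: comm_ring_1 mat"
  assumes G: "G \<in> carrier_mat (Suc (Suc L)) (Suc (Suc L))"
  shows "det (G * jacobi_factor G L) = det G * (det G * ((-1) ^ L * det (mat L L (\<lambda>(r, c). G $$ (Suc r, c)))))"
proof -
  define K where "K = jacobi_factor G L"
  define H where "H = mat (Suc L) (Suc L) (\<lambda>(r, c). if c = L then (if r = 0 then det G else 0) else G $$ (r, c))"
  have GK: "G * K \<in> carrier_mat (Suc (Suc L)) (Suc (Suc L))" using G by (simp add: K_def jacobi_factor_def)
  have del: "mat_delete (G * K) (Suc L) (Suc L) = H"
    unfolding K_def mult_jacobi_factor[OF G] H_def mat_delete_def by (rule eq_matI) auto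
  have "mat_delete H 0 L = mat L L (\<lambda>(r, c). G $$ (Suc r, c))"
    unfolding H_def mat_delete_def by (rule eq_matI) auto
  then have det_H: "det H = det G * ((-1) ^ L * det (mat L L (\<lambda>(r, c). G $$ (Suc r, c))))"
    using det_single_entry_col[of H "Suc L" L 0] by (simp add: H_def cofactor_def)
  have "det (G * K) = det G * cofactor (G * K) (Suc L) (Suc L)"
    using det_single_entry_col[OF GK, of "Suc L" "Suc L"] by (simp add: K_def mult_jacobi_factor[OF G])
  also have "\<dots> = det G * det H" unfolding cofactor_def del by simp
  finally show ?thesis unfolding det_H K_def .
qed

theorem desnanot_jacobi:
  fixes G :: "'a :: field mat"
  assumes G: "G \<in> carrier_mat (Suc (Suc L)) (Suc (Suc L))" and "det G \<noteq> 0"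
  shows "det (mat_delete G 0 L) * det (mat_delete G (Suc L) (Suc L))
       - det (mat_delete G 0 (Suc L)) * det (mat_delete G (Suc L) L)
       = det G * det (mat L L (\<lambda>(r, c). G $$ (Suc r, c)))"
proof -
  have "det G * det (jacobi_factor G L) = det (G * jacobi_factor G L)"
    by (rule det_mult[OF G, symmetric]) (simp add: jacobi_factor_def)
  then have "(-1) ^ L * (det (mat_delete G 0 L) * det (mat_delete G (Suc L) (Suc L))
       - det (mat_delete G 0 (Suc L)) * det (mat_delete G (Suc L) L))
     = (-1) ^ L * (det G * det (mat L L (\<lambda>(r, c). G $$ (Suc r, c))))"
    unfolding det_jacobi_factor[OF G] det_mult_jacobi_factor[OF G] using \<open>det G \<noteq> 0\<close> by simp
  then show ?thesis by simp
qed

definition border_row :: "(nat \<Rightarrow> complex) \<Rightarrow> nat \<Rightarrow> complex" where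
  "border_row y b = (-1) ^ b * (\<Prod>c<b. y (Suc c))"

text \<open>Right multiplication by the lower bidiagonal matrix \<open>U\<close> of the proof kills the border row
  outside its last entry and turns the other rows into the corresponding rows of \<open>A W(y)\<close>.\<close>

lemma det_rows_mult_Wmat:
  assumes A: "A \<in> carrier_mat n n" and t: "t < n" and rows: "\<And>a. a < t \<Longrightarrow> r a < n"
    and y: "\<And>c. 1 \<le> c \<Longrightarrow> c \<le> n \<Longrightarrow> y c \<noteq> 0"
  shows "det (mat t t (\<lambda>(a, b). (A * Wmat n y) $$ (r a, b))) =
    (-1) ^ t * det (mat (Suc t) (Suc t) (\<lambda>(a, b). if a < t then A $$ (r a, b) else border_row y b))"
proof -
  define X where "X = mat (Suc t) (Suc t) (\<lambda>(a, b). if a < t then A $$ (r a, b) else border_row y b)"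
  define U where "U = mat (Suc t) (Suc t) (\<lambda>(p, b).
    if b < t then (if p = b then y (Suc b) else if p = Suc b then 1 else 0) else if p = t then 1 else 0)"
  define Bs where "Bs = mat t t (\<lambda>(a, b). (A * Wmat n y) $$ (r a, b))"
  have Xc: "X \<in> carrier_mat (Suc t) (Suc t)" and Uc: "U \<in> carrier_mat (Suc t) (Suc t)"
    unfolding X_def U_def by auto
  have XUc: "X * U \<in> carrier_mat (Suc t) (Suc t)" using Xc Uc by simp
  have XU: "(X * U) $$ (a, b) = (\<Sum>p<Suc t. X $$ (a, p) * U $$ (p, b))" if "a < Suc t" "b < Suc t" for a b
    using that Xc Uc by (simp add: index_mult_mat(1) carrier_matD scalar_prod_def lessThan_atLeast0)
  have XU_col: "(X * U) $$ (a, b) = X $$ (a, b) * y (Suc b) + X $$ (a, Suc b)" if "a < Suc t" "b < t" for a b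
  proof -
    have "(X * U) $$ (a, b) = (\<Sum>p<Suc t. (if p = b then X $$ (a, b) * y (Suc b) else 0)
        + (if p = Suc b then X $$ (a, Suc b) else 0))"
      unfolding XU[OF that(1) less_SucI[OF that(2)]] by (rule sum.cong) (use that in \<open>auto simp: U_def\<close>)
    then show ?thesis using that by (simp add: sum.distrib)
  qed
  have XU_last: "(X * U) $$ (a, t) = X $$ (a, t)" if "a < Suc t" for a
  proof -
    have "(X * U) $$ (a, t) = (\<Sum>p<Suc t. if p = t then X $$ (a, t) else 0)"
      unfolding XU[OF that lessI] by (rule sum.cong) (auto simp: U_def)
    then show ?thesis by simp
  qed
  have border_Suc: "border_row y (Suc b) = - border_row y b * y (Suc b)" for b
    unfolding border_row_def by (simp add: lessThan_Suc)
  have del: "mat_delete (X * U) t t = Bs"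
  proof (rule eq_matI)
    fix a b assume "a < dim_row Bs" "b < dim_col Bs"
    then have a: "a < t" and b: "b < t" unfolding Bs_def by auto
    have "mat_delete (X * U) t t $$ (a, b) = y (Suc b) * A $$ (r a, b) + A $$ (r a, Suc b)"
      using XU_col[of a b] a b Xc Uc by (simp add: mat_delete_def X_def)
    also have "\<dots> = (A * Wmat n y) $$ (r a, b)"
      using mult_Wmat_index[OF A rows[OF a], of b y] b t by simp
    finally show "mat_delete (X * U) t t $$ (a, b) = Bs $$ (a, b)" using a b unfolding Bs_def by simp
  qed (use XUc in \<open>auto simp: Bs_def\<close>)
  have "det (X * U) = (X * U) $$ (t, t) * cofactor (X * U) t t"
    by (rule det_single_entry_row[OF XUc]) (use XU_col border_Suc in \<open>auto simp: X_def\<close>)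
  then have det_XU: "det (X * U) = border_row y t * det Bs"
    unfolding cofactor_def del using XU_last[of t] by (simp add: X_def)
  have "det U = (\<Prod>b<Suc t. U $$ (b, b))"
    by (rule det_lower_triangular_prod[OF _ Uc]) (auto simp: U_def)
  then have det_U: "det U = (\<Prod>b<t. y (Suc b))" by (simp add: lessThan_Suc U_def)
  have "(\<Prod>b<t. y (Suc b)) \<noteq> 0" using y t by auto
  moreover have "det X * (\<Prod>b<t. y (Suc b)) = det (X * U)"
    using det_mult[OF Xc Uc] det_U by simp
  moreover have "\<dots> = (-1) ^ t * (\<Prod>b<t. y (Suc b)) * det Bs"
    using det_XU by (simp add: border_row_def)
  ultimately have "det X = (-1) ^ t * det Bs" by (simp add: field_simps)
  then show ?thesis unfolding Bs_def X_def[symmetric] by simp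
qed

definition bordered_rows :: "'a :: zero mat \<Rightarrow> (nat \<Rightarrow> 'a) \<Rightarrow> nat \<Rightarrow> nat \<Rightarrow> 'a mat" where
  "bordered_rows A v i s = mat (Suc s) (Suc s) (\<lambda>(a, b). if a < s then A $$ (i + a, b) else v b)"

lemma minor_int_mult_Wmat:
  assumes A: "A \<in> carrier_mat n n" and "i + s \<le> n" "s < n"
    and y: "\<And>c. 1 \<le> c \<Longrightarrow> c \<le> n \<Longrightarrow> y c \<noteq> 0"
  shows "minor_int (Suc i) (i + s) (A * Wmat n y) = (-1) ^ s * det (bordered_rows A (border_row y) i s)"
proof -
  have "minor_int (Suc i) (i + s) (A * Wmat n y) = det (mat s s (\<lambda>(a, b). (A * Wmat n y) $$ (i + a, b)))"
    unfolding minor_int_def by simp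
  also have "\<dots> = (-1) ^ s * det (bordered_rows A (border_row y) i s)"
    unfolding bordered_rows_def by (rule det_rows_mult_Wmat[OF A]) (use assms in auto)
  finally show ?thesis .
qed

text \<open>Desnanot--Jacobi applied to the bordered minor of rows \<open>i + 1, \<dots>, i + s + 1\<close>, extended by a
  unit column in the row just above the border.\<close>

lemma bordered_rows_exchange:
  fixes A :: "complex mat"
  assumes s: "1 \<le> s" and nz: "det (bordered_rows A v i s) \<noteq> 0"
  shows "det (bordered_rows A v i s) * minor_int (Suc (Suc i)) (Suc (i + s)) A
    = det (bordered_rows A v (Suc i) s) * minor_int (Suc i) (i + s) A
      + det (bordered_rows A v (Suc i) (s - 1)) * minor_int (Suc i) (Suc (i + s)) A"
proof -
  define G where "G = mat (Suc (Suc s)) (Suc (Suc s)) (\<lambda>(a, b).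
    if b = Suc s then (if a = s then 1 else 0) else if a \<le> s then A $$ (i + a, b) else v b)"
  have G: "G \<in> carrier_mat (Suc (Suc s)) (Suc (Suc s))" unfolding G_def by simp
  have del_carrier: "mat_delete G p q \<in> carrier_mat (Suc s) (Suc s)" for p q
    using mat_delete_carrier[OF G] by simp
  have "det G = G $$ (s, Suc s) * cofactor G s (Suc s)"
    by (rule det_single_entry_col[OF G]) (auto simp: G_def)
  moreover have "mat_delete G s (Suc s) = bordered_rows A v i s"
    unfolding G_def bordered_rows_def mat_delete_def by (rule eq_matI) auto
  ultimately have det_G: "det G = - det (bordered_rows A v i s)"
    by (simp add: G_def cofactor_def)
  have "mat_delete G (Suc s) (Suc s) = mat (Suc s) (Suc s) (\<lambda>(r, c). A $$ (i + r, c))"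
    unfolding G_def mat_delete_def by (rule eq_matI) auto
  then have D_last_last: "det (mat_delete G (Suc s) (Suc s)) = minor_int (Suc i) (Suc (i + s)) A"
    by (simp add: minor_int_def)
  have D_first_last: "mat_delete G 0 (Suc s) = bordered_rows A v (Suc i) s"
    unfolding G_def bordered_rows_def mat_delete_def by (rule eq_matI) auto
  have "det (mat_delete G (Suc s) s) = mat_delete G (Suc s) s $$ (s, s) * cofactor (mat_delete G (Suc s) s) s s"
    by (rule det_single_entry_col[OF del_carrier]) (auto simp: G_def mat_delete_def)
  moreover have "mat_delete (mat_delete G (Suc s) s) s s = mat s s (\<lambda>(r, c). A $$ (i + r, c))"
    unfolding G_def mat_delete_def by (rule eq_matI) auto
  ultimately have D_last: "det (mat_delete G (Suc s) s) = minor_int (Suc i) (i + s) A"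
    by (simp add: G_def mat_delete_def cofactor_def minor_int_def)
  have "det (mat_delete G 0 s) = mat_delete G 0 s $$ (s - 1, s) * cofactor (mat_delete G 0 s) (s - 1) s"
    by (rule det_single_entry_col[OF del_carrier]) (use s in \<open>auto simp: G_def mat_delete_def\<close>)
  moreover have "mat_delete (mat_delete G 0 s) (s - 1) s = bordered_rows A v (Suc i) (s - 1)"
    unfolding G_def bordered_rows_def mat_delete_def using s by (intro eq_matI) auto
  moreover have "(-1 :: complex) ^ (s - 1 + s) = -1"
    using s by (simp add: power_add[symmetric] flip: mult_2)
  ultimately have D_first: "det (mat_delete G 0 s) = - det (bordered_rows A v (Suc i) (s - 1))"
    using s by (simp add: G_def mat_delete_def cofactor_def)
  have "mat s s (\<lambda>(r, c). G $$ (Suc r, c)) = mat s s (\<lambda>(r, c). A $$ (Suc i + r, c))"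
    unfolding G_def by (rule eq_matI) auto
  then have inner: "det (mat s s (\<lambda>(r, c). G $$ (Suc r, c))) = minor_int (Suc (Suc i)) (Suc (i + s)) A"
    by (simp add: minor_int_def)
  show ?thesis
    using desnanot_jacobi[OF G] nz
    unfolding det_G D_last_last D_first_last D_last D_first inner by (simp add: algebra_simps)
qed

lemma minor_int_mult_Wmat_exchange:
  assumes A: "A \<in> carrier_mat n n" and ij: "1 \<le> i" "i < j" "j \<le> n"
    and y: "\<And>c. 1 \<le> c \<Longrightarrow> c \<le> n \<Longrightarrow> y c \<noteq> 0"
    and nz: "minor_int i (j - 1) (A * Wmat n y) \<noteq> 0"
  shows "minor_int (Suc i) j (A * Wmat n y) * minor_int i (j - 1) A
    = minor_int i j A * minor_int (Suc i) (j - 1) (A * Wmat n y)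
      + minor_int (Suc i) j A * minor_int i (j - 1) (A * Wmat n y)"
proof -
  define i0 s where "i0 = i - 1" and "s = j - i"
  have i: "i = Suc i0" and j: "j = Suc (i0 + s)" and s: "1 \<le> s" using ij by (auto simp: i0_def s_def)
  define B where "B = A * Wmat n y"
  define X where "X k r = det (bordered_rows A (border_row y) k r)" for k r
  define \<sigma> :: complex where "\<sigma> = (-1) ^ s"
  have \<sigma>: "\<sigma> * \<sigma> = 1" unfolding \<sigma>_def by (simp flip: power_mult_distrib)
  then have \<sigma>\<sigma>: "\<sigma> * (\<sigma> * z) = z" for z by (metis mult.assoc mult_1)
  have "minor_int i (j - 1) B = \<sigma> * X i0 s"
    using minor_int_mult_Wmat[OF A, of i0 s y] y ij by (simp add: B_def X_def \<sigma>_def i j)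
  then have X1: "X i0 s = \<sigma> * minor_int i (j - 1) B" by (simp add: \<sigma>\<sigma>)
  have "minor_int (Suc i) j B = \<sigma> * X (Suc i0) s"
    using minor_int_mult_Wmat[OF A, of "Suc i0" s y] y ij by (simp add: B_def X_def \<sigma>_def i j)
  then have X2: "X (Suc i0) s = \<sigma> * minor_int (Suc i) j B" by (simp add: \<sigma>\<sigma>)
  have "(-1) ^ (s - 1) = - \<sigma>" using s by (simp add: \<sigma>_def power_eq_if)
  then have "minor_int (Suc i) (j - 1) B = - \<sigma> * X (Suc i0) (s - 1)"
    using minor_int_mult_Wmat[OF A, of "Suc i0" "s - 1" y] y ij s by (simp add: B_def X_def i j)
  then have X3: "X (Suc i0) (s - 1) = - \<sigma> * minor_int (Suc i) (j - 1) B" by (simp add: \<sigma>\<sigma>)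
  have "X i0 s \<noteq> 0" using nz X1 \<sigma> by (auto simp: B_def)
  then have "X i0 s * minor_int (Suc i) j A = X (Suc i0) s * minor_int i (j - 1) A + X (Suc i0) (s - 1) * minor_int i j A"
    using bordered_rows_exchange[OF s, of A "border_row y" i0] by (simp add: X_def i j)
  then have "\<sigma> * (\<sigma> * (minor_int (Suc i) j B * minor_int i (j - 1) A))
      = \<sigma> * (\<sigma> * (minor_int i (j - 1) B * minor_int (Suc i) j A + minor_int (Suc i) (j - 1) B * minor_int i j A))"
    unfolding X1 X2 X3 by (simp add: algebra_simps)
  then show ?thesis unfolding \<sigma>\<sigma> by (simp add: B_def algebra_simps)
qed

definition Mprod_minor :: "nat \<Rightarrow> (nat \<Rightarrow> nat \<Rightarrow> complex) \<Rightarrow> nat \<Rightarrow> nat \<Rightarrow> nat \<Rightarrow> complex" where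
  "Mprod_minor n x k i j = minor_int i j (Mprod n x k)"

lemma Mprod_minor_exchange:
  assumes "1 \<le> k" "1 \<le> i" "i < j" "j \<le> n"
    and "\<And>c. 1 \<le> c \<Longrightarrow> c \<le> n \<Longrightarrow> x k c \<noteq> 0"
    and "Mprod_minor n x k i (j - 1) \<noteq> 0"
  shows "Mprod_minor n x k (Suc i) j * Mprod_minor n x (k - 1) i (j - 1)
    = Mprod_minor n x (k - 1) i j * Mprod_minor n x k (Suc i) (j - 1)
      + Mprod_minor n x (k - 1) (Suc i) j * Mprod_minor n x k i (j - 1)"
proof -
  obtain k' where k: "k = Suc k'" using assms(1) by (cases k) auto
  show ?thesis
    using minor_int_mult_Wmat_exchange[OF Mprod_carrier[of n x k'] assms(2-4), of "x k"] assms(5,6)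
    by (simp add: Mprod_minor_def k)
qed

definition pos_real :: "complex \<Rightarrow> bool" where
  "pos_real z \<longleftrightarrow> (\<exists>r > 0. z = of_real r)"

definition nonneg_real :: "complex \<Rightarrow> bool" where
  "nonneg_real z \<longleftrightarrow> (\<exists>r \<ge> 0. z = of_real r)"

lemma pos_real_nonzero: "pos_real z \<Longrightarrow> z \<noteq> 0"
  unfolding pos_real_def by auto

lemma pos_real_exchange:
  assumes "a * b = c * d + e * f" "pos_real b" "pos_real c" "pos_real d" "nonneg_real e" "pos_real f"
  shows "pos_real a"
proof -
  obtain rb rc rd re rf where "0 < rb" "0 < rc" "0 < rd" "0 \<le> re" "0 < rf"
    and "b = of_real rb" "c = of_real rc" "d = of_real rd" "e = of_real re" "f = of_real rf"
    using assms(2-6) unfolding pos_real_def nonneg_real_def by blast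
  moreover from this have "a = of_real ((rc * rd + re * rf) / rb)"
    using assms(1) by (simp add: field_simps)
  ultimately show ?thesis unfolding pos_real_def
    by (metis add_pos_nonneg divide_pos_pos mult_nonneg_nonneg mult_pos_pos less_imp_le)
qed

lemma Mprod_minor_ones_pos_real:
  assumes "j \<le> n" "1 \<le> i" "i \<le> k + 1" "i \<le> j + 1"
  shows "pos_real (Mprod_minor n (\<lambda>a c. 1) k i j)"
  using assms
proof (induction k arbitrary: i j)
  case 0
  then show ?case using minor_int_Mprod_first_rows[of j n "\<lambda>a c. 1" 0] by (simp add: Mprod_minor_def pos_real_def)
next
  case (Suc k)
  note IH_k = Suc.IH
  let ?t = "Mprod_minor n (\<lambda>a c. 1)"
  show ?case using Suc.prems
  proof (induction j arbitrary: i)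
    case 0
    then show ?case using minor_int_empty[of 0] by (simp add: Mprod_minor_def pos_real_def)
  next
    case (Suc j)
    consider "i = 1" | "i = Suc (Suc j)" | "1 < i" "i < Suc (Suc j)"
      using Suc.prems by linarith
    then show ?case
    proof cases
      case 1
      then show ?thesis using minor_int_Mprod_first_rows[of "Suc j" n "\<lambda>a c. 1" "Suc k"] Suc.prems by (simp add: Mprod_minor_def pos_real_def)
    next
      case 2
      then show ?thesis using minor_int_empty[of "Suc j"] by (simp add: Mprod_minor_def pos_real_def)
    next
      case 3
      define i' where "i' = i - 1"
      have i: "i = Suc i'" "1 \<le> i'" "i' < Suc j" using 3 by (auto simp: i'_def)
      have pos: "pos_real (?t k i' j)" "pos_real (?t k i' (Suc j))" "pos_real (?t (Suc k) (Suc i') j)"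
        "pos_real (?t (Suc k) i' j)"
        using IH_k[of j i'] IH_k[of "Suc j" i'] Suc.IH[of "Suc i'"] Suc.IH[of i'] Suc.prems i by simp_all
      have "nonneg_real (?t k (Suc i') (Suc j))"
      proof (cases "Suc i' \<le> k + 1")
        case True
        then show ?thesis using IH_k[of "Suc j" "Suc i'"] Suc.prems i by (auto simp: pos_real_def nonneg_real_def)
      next
        case False
        then have "?t k (Suc i') (Suc j) = 0"
          unfolding Mprod_minor_def by (intro minor_int_Mprod_below_band) (use Suc.prems i in auto)
        then show ?thesis by (simp add: nonneg_real_def)
      qed
      moreover have "?t (Suc k) (Suc i') (Suc j) * ?t k i' j
          = ?t k i' (Suc j) * ?t (Suc k) (Suc i') j + ?t k (Suc i') (Suc j) * ?t (Suc k) i' j"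
        using Mprod_minor_exchange[of "Suc k" i' "Suc j" n "\<lambda>a c. 1"] pos_real_nonzero[OF pos(4)] Suc.prems i
        by simp
      ultimately show ?thesis using pos_real_exchange pos i(1) by blast
    qed
  qed
qed

section \<open>Subtraction-free polynomials\<close>

definition monomial_eval :: "nat \<Rightarrow> nat \<Rightarrow> (nat \<Rightarrow> nat \<Rightarrow> nat) \<Rightarrow> (nat \<Rightarrow> nat \<Rightarrow> complex) \<Rightarrow> complex" where
  "monomial_eval m n e y = (\<Prod>a=1..m. \<Prod>j=1..n. y a j ^ e a j)"

lemma monomial_eval_add:
  "monomial_eval m n (\<lambda>a j. e a j + e' a j) y = monomial_eval m n e y * monomial_eval m n e' y"
  unfolding monomial_eval_def by (simp add: power_add prod.distrib)

lemma poly_eval_superset: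
  assumes "finite S" "{e. p e \<noteq> 0} \<subseteq> S"
  shows "poly_eval m n p y = (\<Sum>e\<in>S. of_real (p e) * monomial_eval m n e y)"
  unfolding poly_eval_def monomial_eval_def by (rule sum.mono_neutral_left) (use assms in auto)

lemma nonneg_poly_finite: "nonneg_poly m n p \<Longrightarrow> finite {e. p e \<noteq> 0}"
  unfolding nonneg_poly_def is_poly_def by blast

definition single_term :: "real \<Rightarrow> (nat \<Rightarrow> nat \<Rightarrow> nat) \<Rightarrow> (nat \<Rightarrow> nat \<Rightarrow> nat) \<Rightarrow> real" where
  "single_term c e0 e = (if e = e0 then c else 0)"

lemma single_term_support: "{e. single_term c e0 e \<noteq> 0} \<subseteq> {e0}"
  by (auto simp: single_term_def)

lemma nonneg_poly_single_term:
  assumes "0 \<le> c" "\<And>a j. \<not> (1 \<le> a \<and> a \<le> m \<and> 1 \<le> j \<and> j \<le> n) \<Longrightarrow> e0 a j = 0"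
  shows "nonneg_poly m n (single_term c e0)"
  using finite_subset[OF single_term_support] assms unfolding nonneg_poly_def is_poly_def
  by (auto simp: single_term_def)

lemma poly_eval_single_term: "poly_eval m n (single_term c e0) y = of_real c * monomial_eval m n e0 y"
  by (subst poly_eval_superset[OF _ single_term_support]) (simp_all add: single_term_def)

lemma nonneg_poly_add: "nonneg_poly m n p \<Longrightarrow> nonneg_poly m n q \<Longrightarrow> nonneg_poly m n (\<lambda>e. p e + q e)"
proof -
  assume p: "nonneg_poly m n p" and q: "nonneg_poly m n q"
  have "{e. p e + q e \<noteq> 0} \<subseteq> {e. p e \<noteq> 0} \<union> {e. q e \<noteq> 0}" by auto
  then have "finite {e. p e + q e \<noteq> 0}"
    using nonneg_poly_finite[OF p] nonneg_poly_finite[OF q] finite_subset by blast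
  moreover have "e a j = 0" if "p e + q e \<noteq> 0" "\<not> (1 \<le> a \<and> a \<le> m \<and> 1 \<le> j \<and> j \<le> n)" for e a j
    using that p q unfolding nonneg_poly_def is_poly_def by (cases "p e = 0") auto
  ultimately show ?thesis using p q unfolding nonneg_poly_def is_poly_def by simp
qed

lemma poly_eval_add:
  assumes "nonneg_poly m n p" "nonneg_poly m n q"
  shows "poly_eval m n (\<lambda>e. p e + q e) y = poly_eval m n p y + poly_eval m n q y"
proof -
  define S where "S = {e. p e \<noteq> 0} \<union> {e. q e \<noteq> 0}"
  have S: "finite S" using nonneg_poly_finite[OF assms(1)] nonneg_poly_finite[OF assms(2)] by (simp add: S_def)
  have "poly_eval m n (\<lambda>e. p e + q e) y = (\<Sum>e\<in>S. of_real (p e + q e) * monomial_eval m n e y)"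
    by (rule poly_eval_superset[OF S]) (auto simp: S_def)
  also have "\<dots> = (\<Sum>e\<in>S. of_real (p e) * monomial_eval m n e y) + (\<Sum>e\<in>S. of_real (q e) * monomial_eval m n e y)"
    by (simp add: sum.distrib distrib_right)
  also have "\<dots> = poly_eval m n p y + poly_eval m n q y"
    by (subst (1 2) poly_eval_superset[OF S]) (auto simp: S_def)
  finally show ?thesis .
qed

definition poly_mult ::
    "((nat \<Rightarrow> nat \<Rightarrow> nat) \<Rightarrow> real) \<Rightarrow> ((nat \<Rightarrow> nat \<Rightarrow> nat) \<Rightarrow> real) \<Rightarrow> (nat \<Rightarrow> nat \<Rightarrow> nat) \<Rightarrow> real" where
  "poly_mult p q e = (\<Sum>(e1, e2) \<in> {e. p e \<noteq> 0} \<times> {e. q e \<noteq> 0}.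
     if (\<lambda>a j. e1 a j + e2 a j) = e then p e1 * q e2 else 0)"

lemma poly_mult_support:
  "{e. poly_mult p q e \<noteq> 0} \<subseteq> (\<lambda>(e1, e2). \<lambda>a j. e1 a j + e2 a j) ` ({e. p e \<noteq> 0} \<times> {e. q e \<noteq> 0})"
proof (rule subsetI, rule ccontr)
  fix e assume "e \<in> {e. poly_mult p q e \<noteq> 0}"
    and "e \<notin> (\<lambda>(e1, e2). \<lambda>a j. e1 a j + e2 a j) ` ({e. p e \<noteq> 0} \<times> {e. q e \<noteq> 0})"
  then show False unfolding poly_mult_def by (auto intro!: sum.neutral)
qed

lemma nonneg_poly_mult:
  assumes p: "nonneg_poly m n p" and q: "nonneg_poly m n q"
  shows "nonneg_poly m n (poly_mult p q)"
proof -
  have "finite {e. poly_mult p q e \<noteq> 0}"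
    using poly_mult_support nonneg_poly_finite[OF p] nonneg_poly_finite[OF q] finite_subset by blast
  moreover have "poly_mult p q e \<ge> 0" for e
    using p q unfolding poly_mult_def nonneg_poly_def by (intro sum_nonneg) (simp add: case_prod_unfold)
  moreover have "e a j = 0"
    if nz: "poly_mult p q e \<noteq> 0" and out: "\<not> (1 \<le> a \<and> a \<le> m \<and> 1 \<le> j \<and> j \<le> n)" for e a j
  proof -
    have "e \<in> (\<lambda>(e1, e2). \<lambda>a j. e1 a j + e2 a j) ` ({e. p e \<noteq> 0} \<times> {e. q e \<noteq> 0})"
      using poly_mult_support nz by blast
    then obtain e1 e2 where "p e1 \<noteq> 0" "q e2 \<noteq> 0" "e = (\<lambda>a j. e1 a j + e2 a j)" by auto
    then show ?thesis using p q out unfolding nonneg_poly_def is_poly_def by simp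
  qed
  ultimately show ?thesis unfolding nonneg_poly_def is_poly_def by blast
qed

lemma poly_eval_mult:
  assumes p: "nonneg_poly m n p" and q: "nonneg_poly m n q"
  shows "poly_eval m n (poly_mult p q) y = poly_eval m n p y * poly_eval m n q y"
proof -
  define P where "P = {e. p e \<noteq> 0} \<times> {e. q e \<noteq> 0}"
  define add :: "(nat \<Rightarrow> nat \<Rightarrow> nat) \<times> (nat \<Rightarrow> nat \<Rightarrow> nat) \<Rightarrow> nat \<Rightarrow> nat \<Rightarrow> nat"
    where "add = (\<lambda>(e1, e2). \<lambda>a j. e1 a j + e2 a j)"
  have P: "finite P" using nonneg_poly_finite[OF p] nonneg_poly_finite[OF q] by (simp add: P_def)
  have T: "finite (add ` P)" using P by simp
  have "poly_eval m n (poly_mult p q) y = (\<Sum>e\<in>add ` P. of_real (poly_mult p q e) * monomial_eval m n e y)"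
    by (rule poly_eval_superset[OF T]) (use poly_mult_support in \<open>simp add: P_def add_def\<close>)
  also have "\<dots> = (\<Sum>e\<in>add ` P. \<Sum>pr\<in>P. if add pr = e then of_real (p (fst pr) * q (snd pr)) * monomial_eval m n e y else 0)"
    unfolding poly_mult_def of_real_sum sum_distrib_right P_def add_def
    by (intro sum.cong refl) (auto simp: case_prod_unfold)
  also have "\<dots> = (\<Sum>pr\<in>P. of_real (p (fst pr) * q (snd pr)) * monomial_eval m n (add pr) y)"
    by (subst sum.swap) (simp add: T)
  also have "\<dots> = (\<Sum>pr\<in>P. (of_real (p (fst pr)) * monomial_eval m n (fst pr) y) * (of_real (q (snd pr)) * monomial_eval m n (snd pr) y))"
    by (intro sum.cong refl) (simp add: add_def case_prod_unfold monomial_eval_add)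
  also have "\<dots> = poly_eval m n p y * poly_eval m n q y"
    by (simp add: P_def poly_eval_def monomial_eval_def sum_product sum.cartesian_product case_prod_unfold)
  finally show ?thesis .
qed

definition subtraction_free :: "nat \<Rightarrow> nat \<Rightarrow> ((nat \<Rightarrow> nat \<Rightarrow> complex) \<Rightarrow> complex) \<Rightarrow> bool" where
  "subtraction_free m n f \<longleftrightarrow> (\<exists>p. nonneg_poly m n p \<and> (\<forall>y. f y = poly_eval m n p y))"

lemma subtraction_free_poly_eval: "nonneg_poly m n p \<Longrightarrow> subtraction_free m n (poly_eval m n p)"
  unfolding subtraction_free_def by blast

lemma subtraction_free_cong: "subtraction_free m n f \<Longrightarrow> (\<And>y. f y = g y) \<Longrightarrow> subtraction_free m n g"
  unfolding subtraction_free_def by auto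

lemma subtraction_free_const: "0 \<le> c \<Longrightarrow> subtraction_free m n (\<lambda>y. of_real c)"
  unfolding subtraction_free_def
  using nonneg_poly_single_term[of c m n "\<lambda>a j. 0"] poly_eval_single_term[of m n c "\<lambda>a j. 0"]
  by (auto simp: monomial_eval_def)

lemma subtraction_free_var:
  assumes "1 \<le> a" "a \<le> m" "1 \<le> c" "c \<le> n"
  shows "subtraction_free m n (\<lambda>y. y a c)"
proof -
  define e where "e = (\<lambda>a' c'. if a' = a \<and> c' = c then 1 else 0 :: nat)"
  have row: "(\<Prod>c'=1..n. y a' c' ^ e a' c') = (if a' = a then y a c else 1)"
    for y :: "nat \<Rightarrow> nat \<Rightarrow> complex" and a'
  proof (cases "a' = a")
    case True
    have "(\<Prod>c'=1..n. y a' c' ^ e a' c') = (\<Prod>c'=1..n. if c' = c then y a c else 1)"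
      using True by (intro prod.cong) (auto simp: e_def)
    then show ?thesis using True assms by simp
  qed (simp add: e_def)
  have "monomial_eval m n e y = y a c" for y
    unfolding monomial_eval_def row using assms by simp
  moreover have "nonneg_poly m n (single_term 1 e)"
    by (rule nonneg_poly_single_term) (use assms in \<open>auto simp: e_def\<close>)
  ultimately show ?thesis unfolding subtraction_free_def by (auto simp: poly_eval_single_term)
qed

lemma subtraction_free_add:
  "subtraction_free m n f \<Longrightarrow> subtraction_free m n g \<Longrightarrow> subtraction_free m n (\<lambda>y. f y + g y)"
  unfolding subtraction_free_def by (metis nonneg_poly_add poly_eval_add)

lemma subtraction_free_mult:
  "subtraction_free m n f \<Longrightarrow> subtraction_free m n g \<Longrightarrow> subtraction_free m n (\<lambda>y. f y * g y)"
  unfolding subtraction_free_def by (metis nonneg_poly_mult poly_eval_mult)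

lemma subtraction_free_sum:
  "finite I \<Longrightarrow> (\<And>i. i \<in> I \<Longrightarrow> subtraction_free m n (f i)) \<Longrightarrow> subtraction_free m n (\<lambda>y. \<Sum>i\<in>I. f i y)"
proof (induction I rule: finite_induct)
  case empty
  then show ?case using subtraction_free_const[of 0] by simp
next
  case (insert i I)
  then show ?case using subtraction_free_add[of m n "f i" "\<lambda>y. \<Sum>i\<in>I. f i y"] by simp
qed

lemma subtraction_free_prod:
  "finite I \<Longrightarrow> (\<And>i. i \<in> I \<Longrightarrow> subtraction_free m n (f i)) \<Longrightarrow> subtraction_free m n (\<lambda>y. \<Prod>i\<in>I. f i y)"
proof (induction I rule: finite_induct)
  case empty
  then show ?case using subtraction_free_const[of 1] by simp
next
  case (insert i I)
  then show ?case using subtraction_free_mult[of m n "f i" "\<lambda>y. \<Prod>i\<in>I. f i y"] by simp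
qed

lemma strict_mono_on_lessThanI:
  fixes c :: "nat \<Rightarrow> nat"
  assumes "\<And>b. Suc b < s \<Longrightarrow> c b < c (Suc b)"
  shows "strict_mono_on {..<s} c"
proof (rule strict_mono_onI)
  fix a b :: nat assume "a \<in> {..<s}" "b \<in> {..<s}" "a < b"
  then show "c a < c b"
  proof (induction b)
    case (Suc b)
    then show ?case using assms[of b] by (cases "a = b") auto
  qed simp
qed

lemma det_mat_columns:
  "det (mat s s (\<lambda>(a, b). f a b)) = (\<Sum>p | p permutes {0..<s}. signof p * (\<Prod>b\<in>{0..<s}. f (p b) b))"
proof -
  let ?M = "mat s s (\<lambda>(a, b). f a b)"
  have "det ?M = det (transpose_mat ?M)" by (simp add: det_transpose[of _ s])
  also have "\<dots> = (\<Sum>p | p permutes {0..<s}. signof p * (\<Prod>b\<in>{0..<s}. transpose_mat ?M $$ (b, p b)))"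
    by (rule det_def') simp
  also have "\<dots> = (\<Sum>p | p permutes {0..<s}. signof p * (\<Prod>b\<in>{0..<s}. f (p b) b))"
  proof (rule sum.cong[OF refl])
    fix p assume "p \<in> {p. p permutes {0..<s}}"
    then have "p b < s" if "b < s" for b using that permutes_in_image by fastforce
    then show "signof p * (\<Prod>b\<in>{0..<s}. transpose_mat ?M $$ (b, p b)) = signof p * (\<Prod>b\<in>{0..<s}. f (p b) b)"
      by (auto intro!: prod.cong)
  qed
  finally show ?thesis .
qed

lemma det_mat_column_combination:
  fixes u v :: "nat \<Rightarrow> 'a :: comm_ring_1" and P Q :: "nat \<Rightarrow> nat \<Rightarrow> 'a"
  shows "det (mat s s (\<lambda>(a, b). u b * P a b + v b * Q a b)) =
    (\<Sum>X\<in>Pow {0..<s}. (\<Prod>b\<in>X. u b) * (\<Prod>b\<in>{0..<s} - X. v b) *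
        det (mat s s (\<lambda>(a, b). if b \<in> X then P a b else Q a b)))"
proof -
  let ?S = "{0..<s}"
  let ?T = "\<lambda>X p. signof p * (\<Prod>b\<in>?S. if b \<in> X then P (p b) b else Q (p b) b)"
  have summand: "signof p * ((\<Prod>b\<in>X. u b * P (p b) b) * (\<Prod>b\<in>?S - X. v b * Q (p b) b))
      = (\<Prod>b\<in>X. u b) * (\<Prod>b\<in>?S - X. v b) * ?T X p" if "X \<in> Pow ?S" for X p
  proof -
    have "?S \<inter> {b. b \<in> X} = X" "?S \<inter> - {b. b \<in> X} = ?S - X" using that by auto
    then have "(\<Prod>b\<in>?S. if b \<in> X then P (p b) b else Q (p b) b) = (\<Prod>b\<in>X. P (p b) b) * (\<Prod>b\<in>?S - X. Q (p b) b)"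
      by (simp add: prod.If_cases)
    then show ?thesis by (simp add: prod.distrib algebra_simps)
  qed
  have "det (mat s s (\<lambda>(a, b). u b * P a b + v b * Q a b))
      = (\<Sum>p | p permutes ?S. signof p * (\<Prod>b\<in>?S. u b * P (p b) b + v b * Q (p b) b))"
    by (rule det_mat_columns)
  also have "\<dots> = (\<Sum>p | p permutes ?S. \<Sum>X\<in>Pow ?S. (\<Prod>b\<in>X. u b) * (\<Prod>b\<in>?S - X. v b) * ?T X p)"
    unfolding prod_add[OF finite_atLeastLessThan] sum_distrib_left by (intro sum.cong refl summand)
  also have "\<dots> = (\<Sum>X\<in>Pow ?S. (\<Prod>b\<in>X. u b) * (\<Prod>b\<in>?S - X. v b) * (\<Sum>p | p permutes ?S. ?T X p))"
    by (subst sum.swap) (simp add: sum_distrib_left)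
  also have "\<dots> = (\<Sum>X\<in>Pow ?S. (\<Prod>b\<in>X. u b) * (\<Prod>b\<in>?S - X. v b) *
        det (mat s s (\<lambda>(a, b). if b \<in> X then P a b else Q a b)))"
    using det_mat_columns[of s "\<lambda>a b. if b \<in> _ then P a b else Q a b"] by simp
  finally show ?thesis .
qed

definition submatrix_det :: "complex mat \<Rightarrow> nat \<Rightarrow> (nat \<Rightarrow> nat) \<Rightarrow> (nat \<Rightarrow> nat) \<Rightarrow> complex" where
  "submatrix_det A s r c = det (mat s s (\<lambda>(a, b). A $$ (r a, c b)))"

lemma submatrix_det_one_mat_distinct:
  assumes r: "strict_mono_on {..<s} r" and c: "strict_mono_on {..<s} c"
    and rn: "\<And>a. a < s \<Longrightarrow> r a < n" and cn: "\<And>b. b < s \<Longrightarrow> c b < n"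
    and differ: "\<exists>a<s. r a \<noteq> c a"
  shows "submatrix_det (1\<^sub>m n) s r c = 0"
proof -
  define a0 where "a0 = (LEAST a. a < s \<and> r a \<noteq> c a)"
  have a0: "a0 < s" "r a0 \<noteq> c a0" using LeastI_ex[OF differ] unfolding a0_def by auto
  have below: "r a = c a" if "a < a0" for a
    using not_less_Least[of a "\<lambda>a. a < s \<and> r a \<noteq> c a"] that a0 unfolding a0_def by auto
  define A where "A = mat s s (\<lambda>(a, b). (1\<^sub>m n :: complex mat) $$ (r a, c b))"
  have A: "A \<in> carrier_mat s s" unfolding A_def by simp
  have A_entry: "A $$ (a, b) = (if r a = c b then 1 else 0)" if "a < s" "b < s" for a b
    unfolding A_def using that rn cn by simp
  consider "r a0 < c a0" | "c a0 < r a0" using a0(2) by linarith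
  then have "det A = 0"
  proof cases
    case 1
    have "r a0 \<noteq> c b" if "b < s" for b
    proof (cases "b < a0")
      case True
      then show ?thesis using below[OF True] strict_mono_onD[OF r, of b a0] a0 that by auto
    next
      case False
      then show ?thesis using 1 strict_mono_on_leD[OF c, of a0 b] a0 that by auto
    qed
    then have "\<forall>b<s. A $$ (a0, b) = 0" using A_entry a0 by simp
    then show ?thesis using laplace_expansion_row[OF A a0(1)] by simp
  next
    case 2
    have "r a \<noteq> c a0" if "a < s" for a
    proof (cases "a < a0")
      case True
      then show ?thesis using below[OF True] strict_mono_onD[OF c, of a a0] a0 that by auto
    next
      case False
      then show ?thesis using 2 strict_mono_on_leD[OF r, of a0 a] a0 that by auto
    qed
    then have "\<forall>a<s. A $$ (a, a0) = 0" using A_entry a0 by simp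
    then show ?thesis using laplace_expansion_column[OF A a0(1)] by simp
  qed
  then show ?thesis unfolding submatrix_det_def A_def .
qed

lemma submatrix_det_one_mat:
  assumes r: "strict_mono_on {..<s} r" and c: "strict_mono_on {..<s} c"
    and rn: "\<And>a. a < s \<Longrightarrow> r a < n" and cn: "\<And>b. b < s \<Longrightarrow> c b < n"
  shows "submatrix_det (1\<^sub>m n) s r c = (if \<forall>a<s. r a = c a then 1 else 0)"
proof (cases "\<forall>a<s. r a = c a")
  case True
  have "mat s s (\<lambda>(a, b). 1\<^sub>m n $$ (r a, c b)) = (1\<^sub>m s :: complex mat)"
    using True rn cn strict_mono_on_eq[OF c] by (intro eq_matI) auto
  then show ?thesis unfolding submatrix_det_def using True by simp
qed (use submatrix_det_one_mat_distinct[OF assms] in auto)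

lemma submatrix_det_equal_columns:
  assumes "b < s" "b' < s" "b \<noteq> b'" "c b = c b'"
  shows "submatrix_det A s r c = 0"
  unfolding submatrix_det_def
  by (rule det_identical_columns[of _ s b b']) (use assms in \<open>auto intro!: eq_vecI\<close>)

lemma submatrix_det_Mprod_Suc:
  assumes rn: "\<And>a. a < s \<Longrightarrow> r a < n" and cn: "\<And>b. b < s \<Longrightarrow> c b < n"
  shows "submatrix_det (Mprod n y (Suc k)) s r c = (\<Sum>X\<in>Pow {0..<s}.
    (\<Prod>b\<in>X. y (Suc k) (Suc (c b))) * (\<Prod>b\<in>{0..<s} - X. if Suc (c b) < n then 1 else 0)
      * submatrix_det (Mprod n y k) s r (\<lambda>b. if b \<in> X then c b else Suc (c b)))"
proof -
  have entries: "mat s s (\<lambda>(a, b). Mprod n y (Suc k) $$ (r a, c b)) = mat s s (\<lambda>(a, b).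
      y (Suc k) (Suc (c b)) * Mprod n y k $$ (r a, c b)
      + (if Suc (c b) < n then 1 else 0) * Mprod n y k $$ (r a, Suc (c b)))"
    using rn cn by (intro eq_matI) (simp_all add: Mprod_Suc_index del: Mprod.simps)
  show ?thesis
    unfolding submatrix_det_def entries det_mat_column_combination
    by (intro sum.cong refl arg_cong[where f = "\<lambda>d. _ * d"] arg_cong[where f = det] eq_matI) auto
qed

lemma submatrix_det_Mprod_subtraction_free:
  assumes "k \<le> m" and r: "strict_mono_on {..<s} r" "\<And>a. a < s \<Longrightarrow> r a < n"
    and c: "strict_mono_on {..<s} c" "\<And>b. b < s \<Longrightarrow> c b < n"
  shows "subtraction_free m n (\<lambda>y. submatrix_det (Mprod n y k) s r c)"
  using assms(1) c
proof (induction k arbitrary: c)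
  case 0
  have "subtraction_free m n (\<lambda>y. of_real (if \<forall>a<s. r a = c a then 1 else 0))"
    by (rule subtraction_free_const) simp
  then show ?case
    by (rule subtraction_free_cong) (use submatrix_det_one_mat[OF r(1) "0.prems"(2) r(2) "0.prems"(3)] in simp)
next
  case (Suc k)
  let ?S = "{0..<s}"
  define cX where "cX X b = (if b \<in> X then c b else Suc (c b))" for X b
  have "subtraction_free m n (\<lambda>y. (\<Prod>b\<in>X. y (Suc k) (Suc (c b)))
      * (\<Prod>b\<in>?S - X. if Suc (c b) < n then 1 else 0) * submatrix_det (Mprod n y k) s r (cX X))"
    if X: "X \<subseteq> ?S" for X
  proof (cases "\<forall>b\<in>?S - X. Suc (c b) < n")
    case False
    then have zero: "(\<Prod>b\<in>?S - X. if Suc (c b) < n then 1 else 0 :: complex) = 0" by auto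
    show ?thesis using subtraction_free_const[of 0 m n] by (simp only: zero mult_zero_right mult_zero_left of_real_0)
  next
    case True
    have vars: "subtraction_free m n (\<lambda>y. \<Prod>b\<in>X. y (Suc k) (Suc (c b)))"
    proof (rule subtraction_free_prod)
      show "finite X" using X finite_subset by blast
      fix b assume "b \<in> X"
      then have "c b < n" using X Suc.prems(3) by auto
      then show "subtraction_free m n (\<lambda>y. y (Suc k) (Suc (c b)))"
        using Suc.prems(1) by (intro subtraction_free_var) auto
    qed
    show ?thesis
    proof (cases "\<forall>b. Suc b < s \<longrightarrow> cX X b < cX X (Suc b)")
      case increasing: True
      have "subtraction_free m n (\<lambda>y. submatrix_det (Mprod n y k) s r (cX X))"
        using Suc.IH[of "cX X"] Suc.prems True strict_mono_on_lessThanI[of s "cX X"] increasing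
        by (fastforce simp: cX_def)
      then show ?thesis using True subtraction_free_mult[OF vars] by simp
    next
      case False
      then obtain b where b: "Suc b < s" "\<not> cX X b < cX X (Suc b)" by auto
      have "c b < c (Suc b)" using strict_mono_onD[OF Suc.prems(2), of b "Suc b"] b by simp
      then have "cX X b = cX X (Suc b)" using b by (auto simp: cX_def split: if_splits)
      then show ?thesis
        using submatrix_det_equal_columns[of b s "Suc b" "cX X"] b subtraction_free_const[of 0 m n] by simp
    qed
  qed
  then have sum: "subtraction_free m n (\<lambda>y. \<Sum>X\<in>Pow ?S. (\<Prod>b\<in>X. y (Suc k) (Suc (c b)))
      * (\<Prod>b\<in>?S - X. if Suc (c b) < n then 1 else 0) * submatrix_det (Mprod n y k) s r (cX X))"
    by (intro subtraction_free_sum) auto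
  have expand: "submatrix_det (Mprod n y (Suc k)) s r c = (\<Sum>X\<in>Pow ?S. (\<Prod>b\<in>X. y (Suc k) (Suc (c b)))
      * (\<Prod>b\<in>?S - X. if Suc (c b) < n then 1 else 0) * submatrix_det (Mprod n y k) s r (cX X))" for y
    unfolding cX_def by (rule submatrix_det_Mprod_Suc) (use r(2) Suc.prems(3) in auto)
  show ?case by (rule subtraction_free_cong[OF sum]) (simp only: expand)
qed

lemma minor_int_Mprod_subtraction_free:
  assumes "k \<le> m" "1 \<le> i" "j \<le> n"
  shows "subtraction_free m n (\<lambda>y. minor_int i j (Mprod n y k))"
proof -
  have "subtraction_free m n (\<lambda>y. submatrix_det (Mprod n y k) (j + 1 - i) (\<lambda>a. i - 1 + a) (\<lambda>b. b))"
    using assms by (intro submatrix_det_Mprod_subtraction_free) (auto simp: strict_mono_on_def)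
  then show ?thesis by (simp add: minor_int_def submatrix_det_def)
qed

section \<open>The central charge\<close>

lemma Mprod_minor_tau_family:
  assumes x: "\<And>a c. 1 \<le> a \<Longrightarrow> a \<le> m \<Longrightarrow> 1 \<le> c \<Longrightarrow> c \<le> n \<Longrightarrow> x a c \<noteq> 0"
    and generic: "\<And>k i j. k \<le> m \<Longrightarrow> j \<le> n \<Longrightarrow> 1 \<le> i \<Longrightarrow> i \<le> k + 1 \<Longrightarrow> i \<le> j + 1 \<Longrightarrow> Mprod_minor n x k i j \<noteq> 0"
  shows "tau_family (Mprod_minor n x) x m n"
proof
  fix k i j assume "1 \<le> k" "k \<le> m" "1 \<le> i" "i \<le> k" "i < j" "j \<le> n"
  then show "Mprod_minor n x k (Suc i) j * Mprod_minor n x (k - 1) i (j - 1)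
    = Mprod_minor n x (k - 1) i j * Mprod_minor n x k (Suc i) (j - 1)
      + Mprod_minor n x (k - 1) (Suc i) j * Mprod_minor n x k i (j - 1)"
    using x generic by (intro Mprod_minor_exchange) auto
qed (use x generic minor_int_Mprod_first_rows[of _ n x] in
    \<open>auto simp: Mprod_minor_def minor_int_empty minor_int_Mprod_band_edge minor_int_Mprod_below_band\<close>)

lemma gRSK_P_eq_tau_ratio: "gRSK_P m n x = tau_ratio (Mprod_minor n x) m"
  unfolding gRSK_P_def tau_ratio_def Mprod_minor_def by (intro ext) simp

lemma gRSK_Q_eq_tau_ratio: "gRSK_Q m n x = (\<lambda>i l. tau_ratio (Mprod_minor n x) l i n)"
  unfolding gRSK_Q_def tau_ratio_def Mprod_minor_def by (intro ext) simp

lemma central_charge_generic: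
  assumes "1 \<le> m" "1 \<le> n"
    and x: "\<And>a c. 1 \<le> a \<Longrightarrow> a \<le> m \<Longrightarrow> 1 \<le> c \<Longrightarrow> c \<le> n \<Longrightarrow> x a c \<noteq> 0"
    and generic: "\<And>k i j. k \<le> m \<Longrightarrow> j \<le> n \<Longrightarrow> 1 \<le> i \<Longrightarrow> i \<le> k + 1 \<Longrightarrow> i \<le> j + 1 \<Longrightarrow> Mprod_minor n x k i j \<noteq> 0"
  shows "central_charge m n x = F_GT m n (gRSK_Q m n x) + (if m = n then gRSK_P m n x n n else 0)"
proof -
  interpret tau_family "Mprod_minor n x" x m n
    using x generic by (rule Mprod_minor_tau_family)
  have "F_mat m n x = PQ_decoration (Mprod_minor n x) m n"
    unfolding F_mat_def using sum_weights_eq_PQ_decoration assms by simp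
  then show ?thesis
    unfolding central_charge_def gRSK_P_eq_tau_ratio gRSK_Q_eq_tau_ratio PQ_decoration_def by simp
qed

definition toward_ones :: "(nat \<Rightarrow> nat \<Rightarrow> complex) \<Rightarrow> complex \<Rightarrow> nat \<Rightarrow> nat \<Rightarrow> complex" where
  "toward_ones x z = (\<lambda>a c. x a c + z * (1 - x a c))"

lemma toward_ones_0 [simp]: "toward_ones x 0 = x"
  and toward_ones_1 [simp]: "toward_ones x 1 = (\<lambda>a c. 1)"
  by (simp_all add: toward_ones_def)

lemma subtraction_free_toward_ones_poly:
  assumes "subtraction_free m n f"
  obtains Q where "\<And>z. f (toward_ones x z) = poly Q z"
proof -
  obtain p where p: "\<And>y. f y = poly_eval m n p y" using assms unfolding subtraction_free_def by auto
  define Q where "Q = (\<Sum>e\<in>{e. p e \<noteq> 0}. [:of_real (p e):] * (\<Prod>a=1..m. \<Prod>c=1..n. [:x a c, 1 - x a c:] ^ e a c))"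
  have "f (toward_ones x z) = poly Q z" for z
    unfolding p poly_eval_def Q_def toward_ones_def by (simp add: poly_sum poly_prod algebra_simps)
  then show ?thesis by (rule that)
qed

lemma Mprod_minor_toward_ones_poly:
  assumes "k \<le> m" "1 \<le> i" "j \<le> n"
  obtains Q where "\<And>z. Mprod_minor n (toward_ones x z) k i j = poly Q z"
  using subtraction_free_toward_ones_poly[OF minor_int_Mprod_subtraction_free[OF assms]]
  unfolding Mprod_minor_def by blast

lemma eventually_poly_nonzero_at_right:
  fixes Q :: "complex poly"
  assumes "Q \<noteq> 0"
  shows "\<forall>\<^sub>F s in at_right 0. poly Q (of_real s) \<noteq> 0"
proof -
  have "finite (of_real -` {z. poly Q z = 0} :: real set)"
    using poly_roots_finite[OF assms] by (rule finite_vimageI) (simp add: inj_on_def)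
  then have "\<forall>\<^sub>F s in at_right 0. \<forall>r \<in> of_real -` {z. poly Q z = 0}. s \<noteq> r"
    by (intro eventually_ball_finite) (auto intro: eventually_neq_at_within)
  then show ?thesis by eventually_elim auto
qed

text \<open>Along the segment, every minor is a polynomial in the parameter that is positive at the
  all-ones end, so it vanishes only finitely often.\<close>

lemma eventually_generic_toward_ones:
  "\<forall>\<^sub>F s in at_right 0.
     (\<forall>a c. 1 \<le> a \<and> a \<le> m \<and> 1 \<le> c \<and> c \<le> n \<longrightarrow> toward_ones x (of_real s) a c \<noteq> 0) \<and>
     (\<forall>k i j. k \<le> m \<and> j \<le> n \<and> 1 \<le> i \<and> i \<le> k + 1 \<and> i \<le> j + 1 \<longrightarrow> Mprod_minor n (toward_ones x (of_real s)) k i j \<noteq> 0)"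
proof -
  have entries: "\<forall>\<^sub>F s in at_right 0. toward_ones x (of_real s) a c \<noteq> 0" for a c
  proof -
    define L where "L = [:x a c, 1 - x a c:]"
    have L: "toward_ones x z a c = poly L z" for z by (simp add: L_def toward_ones_def algebra_simps)
    have "poly L 1 \<noteq> 0" using L[of 1] by simp
    then have "L \<noteq> 0" by auto
    then show ?thesis unfolding L by (rule eventually_poly_nonzero_at_right)
  qed
  have minors: "\<forall>\<^sub>F s in at_right 0. Mprod_minor n (toward_ones x (of_real s)) k i j \<noteq> 0"
    if kij: "k \<le> m" "j \<le> n" "1 \<le> i" "i \<le> k + 1" "i \<le> j + 1" for k i j
  proof -
    obtain Q where Q: "\<And>z. Mprod_minor n (toward_ones x z) k i j = poly Q z"
      using Mprod_minor_toward_ones_poly[OF kij(1,3,2), where x = x] by blast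
    have "Mprod_minor n (\<lambda>a c. 1) k i j \<noteq> 0"
      using pos_real_nonzero[OF Mprod_minor_ones_pos_real[OF kij(2-5)]] .
    then have "poly Q 1 \<noteq> 0" using Q[of 1] by simp
    then have "Q \<noteq> 0" by auto
    then show ?thesis unfolding Q by (rule eventually_poly_nonzero_at_right)
  qed
  define G where "G = {(k, i, j). k \<le> m \<and> j \<le> n \<and> 1 \<le> i \<and> i \<le> k + 1 \<and> i \<le> j + 1}"
  have "G \<subseteq> {..m} \<times> {..n + 1} \<times> {..n}" by (auto simp: G_def)
  then have "finite G" by (rule finite_subset) simp
  then have "\<forall>\<^sub>F s in at_right 0. \<forall>(k, i, j) \<in> G. Mprod_minor n (toward_ones x (of_real s)) k i j \<noteq> 0"
    by (rule eventually_ball_finite) (auto simp: G_def intro: minors)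
  moreover have "\<forall>\<^sub>F s in at_right 0. \<forall>(a, c) \<in> {1..m} \<times> {1..n}. toward_ones x (of_real s) a c \<noteq> 0"
    by (rule eventually_ball_finite) (auto intro: entries)
  ultimately show ?thesis
  proof eventually_elim
    case (elim s)
    show ?case
    proof (intro conjI allI impI)
      fix a c assume "1 \<le> a \<and> a \<le> m \<and> 1 \<le> c \<and> c \<le> n"
      then show "toward_ones x (of_real s) a c \<noteq> 0" using elim(2) by auto
    next
      fix k i j assume "k \<le> m \<and> j \<le> n \<and> 1 \<le> i \<and> i \<le> k + 1 \<and> i \<le> j + 1"
      then have "(k, i, j) \<in> G" by (simp add: G_def)
      then show "Mprod_minor n (toward_ones x (of_real s)) k i j \<noteq> 0" using elim(1) by auto
    qed
  qed
qed

lemma tendsto_minor_int_toward_ones: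
  assumes "k \<le> m" "1 \<le> i" "j \<le> n"
  shows "((\<lambda>s. minor_int i j (Mprod n (toward_ones x (of_real s)) k)) \<longlongrightarrow> minor_int i j (Mprod n x k)) (at_right 0)"
proof -
  obtain Q where Q: "\<And>z. minor_int i j (Mprod n (toward_ones x z) k) = poly Q z"
    using Mprod_minor_toward_ones_poly[OF assms, where x = x] unfolding Mprod_minor_def by blast
  have "((\<lambda>s. poly Q (of_real s)) \<longlongrightarrow> poly Q (of_real 0)) (at_right (0::real))"
    by (intro tendsto_intros)
  then show ?thesis unfolding Q by (simp flip: Q)
qed

lemma tendsto_F_GT:
  assumes "1 \<le> K"
    and lim: "\<And>i j. 1 \<le> i \<Longrightarrow> i \<le> K \<Longrightarrow> i \<le> j \<Longrightarrow> j \<le> N \<Longrightarrow> ((\<lambda>s. z s i j) \<longlongrightarrow> z0 i j) F"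
    and nz: "\<And>i j. 1 \<le> i \<Longrightarrow> i \<le> K \<Longrightarrow> i \<le> j \<Longrightarrow> j \<le> N \<Longrightarrow> z0 i j \<noteq> 0"
  shows "((\<lambda>s. F_GT N K (z s)) \<longlongrightarrow> F_GT N K z0) F"
  unfolding F_GT_def
proof (intro tendsto_add tendsto_sum)
  fix i j assume "i \<in> {1..K}" "j \<in> {i..N - 1}"
  then show "((\<lambda>s. z s i (j + 1) / z s i j) \<longlongrightarrow> z0 i (j + 1) / z0 i j) F"
    by (intro tendsto_divide lim nz) auto
next
  fix i j assume "i \<in> {1..K - 1}" "j \<in> {i..N - 1}"
  then show "((\<lambda>s. z s i j / z s (i + 1) (j + 1)) \<longlongrightarrow> z0 i j / z0 (i + 1) (j + 1)) F"
    by (intro tendsto_divide lim nz) auto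
next
  show "((\<lambda>s. if K < N then z s K K else 0) \<longlongrightarrow> (if K < N then z0 K K else 0)) F"
    using lim[of K K] \<open>1 \<le> K\<close> by auto
qed

context
  fixes m n :: nat and x :: "nat \<Rightarrow> nat \<Rightarrow> complex"
  assumes domain: "gRSK_defined m n x"
begin

lemma tendsto_gRSK_P_toward_ones:
  assumes "1 \<le> i" "i \<le> m" "i \<le> j" "j \<le> n"
  shows "((\<lambda>s. gRSK_P m n (toward_ones x (of_real s)) i j) \<longlongrightarrow> gRSK_P m n x i j) (at_right 0)"
  unfolding gRSK_P_def using assms domain
  by (intro tendsto_divide tendsto_minor_int_toward_ones) (auto simp: gRSK_defined_def)

lemma tendsto_gRSK_Q_toward_ones:
  assumes "1 \<le> j" "j \<le> n" "j \<le> i" "i \<le> m"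
  shows "((\<lambda>s. gRSK_Q m n (toward_ones x (of_real s)) j i) \<longlongrightarrow> gRSK_Q m n x j i) (at_right 0)"
  unfolding gRSK_Q_def using assms domain
  by (intro tendsto_divide tendsto_minor_int_toward_ones) (auto simp: gRSK_defined_def)

lemma gRSK_P_nonzero: "1 \<le> i \<Longrightarrow> i \<le> m \<Longrightarrow> i \<le> j \<Longrightarrow> j \<le> n \<Longrightarrow> gRSK_P m n x i j \<noteq> 0"
  using domain by (simp add: gRSK_defined_def gRSK_P_def)

lemma gRSK_Q_nonzero: "1 \<le> j \<Longrightarrow> j \<le> n \<Longrightarrow> j \<le> i \<Longrightarrow> i \<le> m \<Longrightarrow> gRSK_Q m n x j i \<noteq> 0"
  using domain by (simp add: gRSK_defined_def gRSK_Q_def)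

theorem central_charge_eq:
  assumes "1 \<le> m" "1 \<le> n"
  shows "central_charge m n x = F_GT m n (gRSK_Q m n x) + (if m = n then gRSK_P m n x n n else 0)"
proof -
  define rhs where "rhs y = F_GT m n (gRSK_Q m n y) + (if m = n then gRSK_P m n y n n else 0)" for y
  define y where "y s = toward_ones x (of_real s)" for s :: real
  have eventually_eq: "\<forall>\<^sub>F s in at_right 0. central_charge m n (y s) = rhs (y s)"
    using eventually_generic_toward_ones[of m n x]
    by eventually_elim (unfold rhs_def y_def, rule central_charge_generic[OF assms], auto)
  have lhs: "((\<lambda>s. central_charge m n (y s)) \<longlongrightarrow> central_charge m n x) (at_right 0)"
    unfolding central_charge_def F_mat_def y_def
    by (intro tendsto_diff tendsto_sum tendsto_F_GT[OF assms(1)] tendsto_gRSK_P_toward_ones gRSK_P_nonzero)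
      (auto simp: toward_ones_def intro!: tendsto_eq_intros)
  have "((\<lambda>s. F_GT m n (gRSK_Q m n (y s))) \<longlongrightarrow> F_GT m n (gRSK_Q m n x)) (at_right 0)"
    unfolding y_def by (intro tendsto_F_GT[OF assms(2)] tendsto_gRSK_Q_toward_ones gRSK_Q_nonzero)
  moreover have "((\<lambda>s. if m = n then gRSK_P m n (y s) n n else 0) \<longlongrightarrow> (if m = n then gRSK_P m n x n n else 0)) (at_right 0)"
    using tendsto_gRSK_P_toward_ones[of n n] assms by (cases "m = n") (auto simp: y_def)
  ultimately have rhs: "((\<lambda>s. rhs (y s)) \<longlongrightarrow> rhs x) (at_right 0)"
    unfolding rhs_def by (rule tendsto_add)
  have "((\<lambda>s. rhs (y s)) \<longlongrightarrow> central_charge m n x) (at_right 0)"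
    using tendsto_cong[OF eventually_eq] lhs by simp
  from tendsto_unique[OF _ this rhs] show ?thesis unfolding rhs_def by simp
qed

end

definition subtraction_free_ratio_on ::
    "nat \<Rightarrow> nat \<Rightarrow> ((nat \<Rightarrow> nat \<Rightarrow> complex) \<Rightarrow> bool) \<Rightarrow> ((nat \<Rightarrow> nat \<Rightarrow> complex) \<Rightarrow> complex) \<Rightarrow> bool" where
  "subtraction_free_ratio_on m n D f \<longleftrightarrow> (\<exists>p q. nonneg_poly m n p \<and> nonneg_poly m n q \<and>
     (\<forall>y. D y \<longrightarrow> poly_eval m n q y \<noteq> 0 \<and> f y * poly_eval m n q y = poly_eval m n p y))"

lemma subtraction_free_ratio_onI:
  assumes "subtraction_free m n f" "subtraction_free m n g" "\<And>y. D y \<Longrightarrow> g y \<noteq> 0"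
  shows "subtraction_free_ratio_on m n D (\<lambda>y. f y / g y)"
  using assms unfolding subtraction_free_def subtraction_free_ratio_on_def by fastforce

lemma subtraction_free_ratio_on_cong:
  "subtraction_free_ratio_on m n D f \<Longrightarrow> (\<And>y. D y \<Longrightarrow> f y = g y) \<Longrightarrow> subtraction_free_ratio_on m n D g"
  unfolding subtraction_free_ratio_on_def by metis

lemma subtraction_free_ratio_on_zero: "subtraction_free_ratio_on m n D (\<lambda>y. 0)"
  using subtraction_free_ratio_onI[OF subtraction_free_const[of 0 m n] subtraction_free_const[of 1 m n], of D]
  by simp

lemma subtraction_free_ratio_on_add:
  assumes "subtraction_free_ratio_on m n D f" "subtraction_free_ratio_on m n D g"
  shows "subtraction_free_ratio_on m n D (\<lambda>y. f y + g y)"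
proof -
  obtain p1 q1 where 1: "nonneg_poly m n p1" "nonneg_poly m n q1"
    "\<And>y. D y \<Longrightarrow> poly_eval m n q1 y \<noteq> 0 \<and> f y * poly_eval m n q1 y = poly_eval m n p1 y"
    using assms(1) unfolding subtraction_free_ratio_on_def by blast
  obtain p2 q2 where 2: "nonneg_poly m n p2" "nonneg_poly m n q2"
    "\<And>y. D y \<Longrightarrow> poly_eval m n q2 y \<noteq> 0 \<and> g y * poly_eval m n q2 y = poly_eval m n p2 y"
    using assms(2) unfolding subtraction_free_ratio_on_def by blast
  have num: "subtraction_free m n (\<lambda>y. poly_eval m n p1 y * poly_eval m n q2 y + poly_eval m n p2 y * poly_eval m n q1 y)"
    and den: "subtraction_free m n (\<lambda>y. poly_eval m n q1 y * poly_eval m n q2 y)"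
    by (intro subtraction_free_add subtraction_free_mult subtraction_free_poly_eval 1 2)+
  have "subtraction_free_ratio_on m n D (\<lambda>y. (poly_eval m n p1 y * poly_eval m n q2 y + poly_eval m n p2 y * poly_eval m n q1 y)
      / (poly_eval m n q1 y * poly_eval m n q2 y))"
    by (rule subtraction_free_ratio_onI[OF num den]) (use 1 2 in auto)
  then show ?thesis
    by (rule subtraction_free_ratio_on_cong) (use 1(3) 2(3) in \<open>auto simp: field_simps\<close>)
qed

lemma subtraction_free_ratio_on_sum:
  "finite I \<Longrightarrow> (\<And>i. i \<in> I \<Longrightarrow> subtraction_free_ratio_on m n D (f i))
    \<Longrightarrow> subtraction_free_ratio_on m n D (\<lambda>y. \<Sum>i\<in>I. f i y)"
proof (induction I rule: finite_induct)
  case empty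
  then show ?case using subtraction_free_ratio_on_zero by simp
next
  case (insert i I)
  then show ?case using subtraction_free_ratio_on_add[of m n D "f i" "\<lambda>y. \<Sum>i\<in>I. f i y"] by simp
qed

lemma subtraction_free_ratio_on_If:
  "(c \<Longrightarrow> subtraction_free_ratio_on m n D f) \<Longrightarrow> subtraction_free_ratio_on m n D (\<lambda>y. if c then f y else 0)"
  using subtraction_free_ratio_on_zero by (cases c) auto

lemma subtraction_free_ratio_on_ratio_quotient:
  assumes "subtraction_free m n f" "subtraction_free m n g" "subtraction_free m n h" "subtraction_free m n k"
    and "\<And>y. D y \<Longrightarrow> g y \<noteq> 0 \<and> h y \<noteq> 0"
  shows "subtraction_free_ratio_on m n D (\<lambda>y. (f y / g y) / (h y / k y))"
proof -
  have "subtraction_free_ratio_on m n D (\<lambda>y. (f y * k y) / (g y * h y))"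
    by (rule subtraction_free_ratio_onI) (use assms in \<open>auto intro: subtraction_free_mult\<close>)
  then show ?thesis by (rule subtraction_free_ratio_on_cong) simp
qed

definition gRSK_domain :: "nat \<Rightarrow> nat \<Rightarrow> (nat \<Rightarrow> nat \<Rightarrow> complex) \<Rightarrow> bool" where
  "gRSK_domain m n y \<longleftrightarrow>
     (\<forall>a j. 1 \<le> a \<and> a \<le> m \<and> 1 \<le> j \<and> j \<le> n \<longrightarrow> y a j \<noteq> 0) \<and> gRSK_defined m n y"

lemma central_charge_subtraction_free_ratio:
  assumes "1 \<le> m" "1 \<le> n"
  shows "subtraction_free_ratio_on m n (gRSK_domain m n) (central_charge m n)"
proof -
  have minor: "subtraction_free m n (\<lambda>y. minor_int i n (Mprod n y l))" if "l \<le> m" "1 \<le> i" for l i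
    using that by (intro minor_int_Mprod_subtraction_free) auto
  have Q_minors: "minor_int j n (Mprod n y i) \<noteq> 0 \<and> minor_int (Suc j) n (Mprod n y i) \<noteq> 0"
    if "gRSK_domain m n y" "1 \<le> j" "j \<le> n" "j \<le> i" "i \<le> m" for y j i
    using that unfolding gRSK_domain_def gRSK_defined_def by auto
  have "subtraction_free_ratio_on m n (gRSK_domain m n)
      (\<lambda>y. F_GT m n (gRSK_Q m n y) + (if m = n then gRSK_P m n y n n else 0))"
    unfolding F_GT_def gRSK_Q_def
  proof (intro subtraction_free_ratio_on_add subtraction_free_ratio_on_sum subtraction_free_ratio_on_If finite_atLeastAtMost)
    fix i j assume "i \<in> {1..n}" "j \<in> {i..m - 1}"
    then show "subtraction_free_ratio_on m n (gRSK_domain m n) (\<lambda>y.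
        minor_int i n (Mprod n y (j + 1)) / minor_int (i + 1) n (Mprod n y (j + 1))
        / (minor_int i n (Mprod n y j) / minor_int (i + 1) n (Mprod n y j)))"
      using Q_minors by (intro subtraction_free_ratio_on_ratio_quotient minor) (auto simp del: Mprod.simps)
  next
    fix i j assume "i \<in> {1..n - 1}" "j \<in> {i..m - 1}"
    then show "subtraction_free_ratio_on m n (gRSK_domain m n) (\<lambda>y.
        minor_int i n (Mprod n y j) / minor_int (i + 1) n (Mprod n y j)
        / (minor_int (i + 1) n (Mprod n y (j + 1)) / minor_int (i + 1 + 1) n (Mprod n y (j + 1))))"
      using Q_minors by (intro subtraction_free_ratio_on_ratio_quotient minor) (auto simp del: Mprod.simps)
  next
    assume "n < m"
    then show "subtraction_free_ratio_on m n (gRSK_domain m n) (\<lambda>y. minor_int n n (Mprod n y n) / minor_int (n + 1) n (Mprod n y n))"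
      using Q_minors assms by (intro subtraction_free_ratio_onI minor) auto
  next
    assume "m = n"
    then show "subtraction_free_ratio_on m n (gRSK_domain m n) (\<lambda>y. gRSK_P m n y n n)"
      unfolding gRSK_P_def using assms
      by (intro subtraction_free_ratio_onI minor) (auto simp: gRSK_domain_def gRSK_defined_def)
  qed
  then show ?thesis
    by (rule subtraction_free_ratio_on_cong) (use central_charge_eq assms in \<open>auto simp: gRSK_domain_def\<close>)
qed

theorem proposition4p14:
  fixes m n :: nat and x :: "nat \<Rightarrow> nat \<Rightarrow> complex"
  assumes "1 \<le> m" and "1 \<le> n"
    and "\<forall>a j. 1 \<le> a \<and> a \<le> m \<and> 1 \<le> j \<and> j \<le> n \<longrightarrow> x a j \<noteq> 0"
    and "gRSK_defined m n x"
  shows "central_charge m n x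
           = F_GT m n (gRSK_Q m n x) + (if m = n then gRSK_P m n x n n else 0)
         \<and> (\<exists>p q. nonneg_poly m n p \<and> nonneg_poly m n q \<and> (\<exists>e. q e \<noteq> 0) \<and>
           (\<forall>y. (\<forall>a j. 1 \<le> a \<and> a \<le> m \<and> 1 \<le> j \<and> j \<le> n \<longrightarrow> y a j \<noteq> 0) \<and> gRSK_defined m n y
                \<longrightarrow> central_charge m n y * poly_eval m n q y = poly_eval m n p y))"
proof
  show "central_charge m n x = F_GT m n (gRSK_Q m n x) + (if m = n then gRSK_P m n x n n else 0)"
    using central_charge_eq assms by blast
next
  obtain p q where pq: "nonneg_poly m n p" "nonneg_poly m n q"
    and ratio: "\<And>y. gRSK_domain m n y \<Longrightarrow> poly_eval m n q y \<noteq> 0 \<and> central_charge m n y * poly_eval m n q y = poly_eval m n p y"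
    using central_charge_subtraction_free_ratio[OF assms(1,2)] unfolding subtraction_free_ratio_on_def by blast
  have "poly_eval m n q x \<noteq> 0" using ratio assms by (simp add: gRSK_domain_def)
  then have "\<exists>e. q e \<noteq> 0" by (rule contrapos_np) (simp add: poly_eval_def)
  with pq ratio show "\<exists>p q. nonneg_poly m n p \<and> nonneg_poly m n q \<and> (\<exists>e. q e \<noteq> 0) \<and>
      (\<forall>y. (\<forall>a j. 1 \<le> a \<and> a \<le> m \<and> 1 \<le> j \<and> j \<le> n \<longrightarrow> y a j \<noteq> 0) \<and> gRSK_defined m n y
        \<longrightarrow> central_charge m n y * poly_eval m n q y = poly_eval m n p y)"
    unfolding gRSK_domain_def by blast
qed

end
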